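(* Let $\gamma\in\mathcal{C}$ have an outer basepoint. If $\gamma$ is not simple, then $\gamma$ has an outwards loop.
   Context: A curve is a map $\gamma:[0,1]\to\mathbb{R}^2$ with $\gamma(0)=\gamma(1)$ (basepoint), regular and generic (finitely many self-intersections, each transverse double point); $\mathcal{C}$ is the set of such curves. Faces: components of $\mathbb{R}^2\setminus[\gamma]$, $F_{ext}$ unbounded; $wn$ winding number. Outer basepoint: $\gamma(0)$ is incident to exactly two faces, $F_{ext}$ and a face $F$ with $wn(F,\gamma)=\pm1$. Direct split at self-intersection $v=\gamma(t)=\gamma(t^* )$, $t<t^*$: the closed curve $\gamma|_{[t,t^*]}$ based at $v$. A loop is a direct split $\gamma_v$ that is a simple closed curve (other strands of $\gamma$ may cross it). A loop $\gamma_v$ is outwards if the two edges of $\gamma$ incident to $v$ that do not belong to $\gamma_v$ both lie outside the interior region of $\gamma_v$. *)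

theory Defs
  imports "HOL-Complex_Analysis.Winding_Numbers"
begin

text \<open>Curves are maps [0,1] -> R^2, with R^2 identified with the complex plane.\<close>

definition regular_curve :: "(real \<Rightarrow> complex) \<Rightarrow> bool" where
  "regular_curve \<gamma> \<longleftrightarrow> \<gamma> 0 = \<gamma> 1 \<and>
     (\<exists>\<gamma>'. continuous_on {0..1} \<gamma>' \<and> \<gamma>' 0 = \<gamma>' 1 \<and>
        (\<forall>t\<in>{0..1}. (\<gamma> has_vector_derivative \<gamma>' t) (at t within {0..1}) \<and> \<gamma>' t \<noteq> 0))"

definition tangent :: "(real \<Rightarrow> complex) \<Rightarrow> real \<Rightarrow> complex" where
  "tangent \<gamma> t = vector_derivative \<gamma> (at t within {0..1})"

text \<open>Self-intersection points (parameters taken in [0,1), since gamma 0 = gamma 1).\<close>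
definition self_intersections :: "(real \<Rightarrow> complex) \<Rightarrow> complex set" where
  "self_intersections \<gamma> =
     {p. \<exists>s u. s \<in> {0..<1} \<and> u \<in> {0..<1} \<and> s \<noteq> u \<and> \<gamma> s = p \<and> \<gamma> u = p}"

text \<open>Generic: finitely many self-intersections, each a transverse double point.\<close>
definition generic_curve :: "(real \<Rightarrow> complex) \<Rightarrow> bool" where
  "generic_curve \<gamma> \<longleftrightarrow> finite (self_intersections \<gamma>) \<and>
     (\<forall>p\<in>self_intersections \<gamma>. card {s\<in>{0..<1}. \<gamma> s = p} = 2 \<and>
        (\<forall>s u. s \<in> {0..<1} \<and> u \<in> {0..<1} \<and> s \<noteq> u \<and> \<gamma> s = p \<and> \<gamma> u = p \<longrightarrow>
           Im (cnj (tangent \<gamma> s) * tangent \<gamma> u) \<noteq> 0))"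

definition curveC :: "(real \<Rightarrow> complex) \<Rightarrow> bool" where
  "curveC \<gamma> \<longleftrightarrow> regular_curve \<gamma> \<and> generic_curve \<gamma>"

definition faces :: "(real \<Rightarrow> complex) \<Rightarrow> complex set set" where
  "faces \<gamma> = components (- path_image \<gamma>)"

definition ext_face :: "(real \<Rightarrow> complex) \<Rightarrow> complex set" where
  "ext_face \<gamma> = outside (path_image \<gamma>)"

definition face_wn :: "complex set \<Rightarrow> (real \<Rightarrow> complex) \<Rightarrow> complex" where
  "face_wn F \<gamma> = winding_number \<gamma> (SOME z. z \<in> F)"

text \<open>A face F is incident to a point p if p lies in the closure of F.\<close>
definition outer_basepoint :: "(real \<Rightarrow> complex) \<Rightarrow> bool" where
  "outer_basepoint \<gamma> \<longleftrightarrow>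
     (let Inc = {F \<in> faces \<gamma>. \<gamma> 0 \<in> closure F} in
        card Inc = 2 \<and> ext_face \<gamma> \<in> Inc \<and>
        (\<exists>F\<in>Inc. F \<noteq> ext_face \<gamma> \<and> (face_wn F \<gamma> = 1 \<or> face_wn F \<gamma> = -1)))"

definition direct_split :: "(real \<Rightarrow> complex) \<Rightarrow> real \<Rightarrow> real \<Rightarrow> (real \<Rightarrow> complex)" where
  "direct_split \<gamma> t t' = subpath t t' \<gamma>"

definition is_split_pair :: "(real \<Rightarrow> complex) \<Rightarrow> real \<Rightarrow> real \<Rightarrow> bool" where
  "is_split_pair \<gamma> t t' \<longleftrightarrow> 0 \<le> t \<and> t < t' \<and> t' < 1 \<and> \<gamma> t = \<gamma> t'"

definition is_loop :: "(real \<Rightarrow> complex) \<Rightarrow> real \<Rightarrow> real \<Rightarrow> bool" where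
  "is_loop \<gamma> t t' \<longleftrightarrow> is_split_pair \<gamma> t t' \<and> simple_path (direct_split \<gamma> t t')"

definition periodic_ext :: "(real \<Rightarrow> complex) \<Rightarrow> real \<Rightarrow> complex" where
  "periodic_ext \<gamma> s = \<gamma> (frac s)"

text \<open>Outwards loop: the two edges of gamma at v not belonging to the loop (the one arriving
  at parameter t and the one leaving at parameter t') lie outside the interior region of the
  loop. Since an edge meets the loop only at its endpoints, this is equivalent to the parts of
  these edges close to v lying outside the interior.\<close>
definition outwards_loop :: "(real \<Rightarrow> complex) \<Rightarrow> real \<Rightarrow> real \<Rightarrow> bool" where
  "outwards_loop \<gamma> t t' \<longleftrightarrow> is_loop \<gamma> t t' \<and>
     (\<exists>\<epsilon>>0. \<forall>\<delta>. 0 < \<delta> \<and> \<delta> < \<epsilon> \<longrightarrow>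
        periodic_ext \<gamma> (t - \<delta>) \<notin> inside (path_image (direct_split \<gamma> t t')) \<and>
        periodic_ext \<gamma> (t' + \<delta>) \<notin> inside (path_image (direct_split \<gamma> t t')))"

end

theory Submission
  imports Defs
begin

(* Take the double point v = \<gamma> t = \<gamma> t' whose second parameter t' is smallest: then \<gamma> on
   [t, t'] is a simple loop, and genericity says that v has no other preimage and that the
   tangents \<gamma>' t, \<gamma>' t' are independent. In the affine chart at v with these tangents as axes,
   the curve near v consists of two almost straight strands, so the open quadrant between the
   edge arriving at t and the edge leaving at t' (the wedge) misses the loop and is connected to
   both edges outside it; the loop is outwards once one point of the wedge is not inside it.
   If t > 0, the start \<gamma> 0 lies on the boundary of the exterior face, hence not inside the loop,
   and \<gamma> on [0, t - \<delta>] joins it to the arriving edge without meeting the loop. If t = 0 and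
   the wedge were inside the loop, the two quadrants on either side of the arriving edge would
   belong to two distinct bounded faces incident to the basepoint (a comparison with a small
   triangle shows that their winding numbers differ), so together with the exterior face three
   faces would be incident to the basepoint. *)

(* By Cramer's rule: z = coord1 a b z * a + coord2 a b z * b whenever a and b are independent. *)
definition coord1 :: "complex \<Rightarrow> complex \<Rightarrow> complex \<Rightarrow> real" where
  "coord1 a b z = Im (cnj z * b) / Im (cnj a * b)"

definition coord2 :: "complex \<Rightarrow> complex \<Rightarrow> complex \<Rightarrow> real" where
  "coord2 a b z = Im (cnj a * z) / Im (cnj a * b)"

lemma linear_coord1: "linear (coord1 a b)"
  by (rule linearI) (simp_all add: coord1_def add_divide_distrib[symmetric] algebra_simps)

lemma linear_coord2: "linear (coord2 a b)"
  by (rule linearI) (simp_all add: coord2_def add_divide_distrib[symmetric] algebra_simps)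

lemma coord_zero [simp]: "coord1 a b 0 = 0" "coord2 a b 0 = 0"
  by (simp_all add: coord1_def coord2_def)

lemma coord_basis:
  assumes "Im (cnj a * b) \<noteq> 0"
  shows "coord1 a b a = 1" "coord2 a b a = 0" "coord1 a b b = 0" "coord2 a b b = 1"
  using assms by (simp_all add: coord1_def coord2_def algebra_simps)

lemma coord_decomp:
  assumes "Im (cnj a * b) \<noteq> 0"
  shows "coord1 a b z *\<^sub>R a + coord2 a b z *\<^sub>R b = z"
proof -
  define d where "d = Im (cnj a * b)"
  define x where "x = Im (cnj z * b)"
  define y where "y = Im (cnj a * z)"
  have "d \<noteq> 0" unfolding d_def by (rule assms)
  have "(x / d) *\<^sub>R a + (y / d) *\<^sub>R b = inverse d *\<^sub>R (x *\<^sub>R a + y *\<^sub>R b)"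
    by (simp add: scaleR_add_right divide_inverse_commute)
  also have "x *\<^sub>R a + y *\<^sub>R b = d *\<^sub>R z"
    by (simp add: x_def y_def d_def complex_eq_iff algebra_simps)
  finally have "(x / d) *\<^sub>R a + (y / d) *\<^sub>R b = z"
    using \<open>d \<noteq> 0\<close> by simp
  then show ?thesis
    by (simp add: coord1_def coord2_def x_def y_def d_def)
qed

lemma Im_mult_cnj_coord:
  assumes "Im (cnj a * b) \<noteq> 0"
  shows "Im (x * cnj y) =
    Im (cnj a * b) * (coord2 a b x * coord1 a b y - coord1 a b x * coord2 a b y)"
proof -
  define d where "d = Im (cnj a * b)"
  define c where "c = Im (x * cnj y)"
  have "Im (cnj a * x) * Im (cnj y * b) - Im (cnj x * b) * Im (cnj a * y) = d * c"
    by (simp add: d_def c_def algebra_simps)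
  then show ?thesis
    using assms unfolding coord1_def coord2_def d_def[symmetric] c_def[symmetric]
    by (simp add: field_simps)
qed

lemma abs_coord1_le: "\<bar>coord1 a b z\<bar> \<le> norm b * norm z / \<bar>Im (cnj a * b)\<bar>"
proof -
  have "\<bar>Im (cnj z * b)\<bar> \<le> norm b * norm z"
    using abs_Im_le_cmod[of "cnj z * b"] by (simp add: norm_mult mult.commute)
  then show ?thesis by (simp add: coord1_def abs_div divide_right_mono)
qed

lemma abs_coord2_le: "\<bar>coord2 a b z\<bar> \<le> norm a * norm z / \<bar>Im (cnj a * b)\<bar>"
proof -
  have "\<bar>Im (cnj a * z)\<bar> \<le> norm a * norm z"
    using abs_Im_le_cmod[of "cnj a * z"] by (simp add: norm_mult)
  then show ?thesis by (simp add: coord2_def abs_div divide_right_mono)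
qed

lemma periodic_ext_eq: "0 \<le> s \<Longrightarrow> s < 1 \<Longrightarrow> periodic_ext \<gamma> s = \<gamma> s"
  by (simp add: periodic_ext_def frac_eq)

lemma periodic_ext_neg: "-1 < s \<Longrightarrow> s < 0 \<Longrightarrow> periodic_ext \<gamma> s = \<gamma> (s + 1)"
proof -
  assume "-1 < s" "s < 0"
  then have "floor s = -1" by (simp add: floor_eq_iff)
  then show ?thesis by (simp add: periodic_ext_def frac_def)
qed

lemma periodic_ext_linear_approx:
  assumes deriv: "\<And>s. s \<in> {0..1} \<Longrightarrow> (\<gamma> has_vector_derivative \<gamma>' s) (at s within {0..1})"
    and "\<gamma> 0 = \<gamma> 1" "\<gamma>' 0 = \<gamma>' 1" "0 \<le> \<tau>" "\<tau> < 1" "\<kappa> > 0"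
  obtains h where "h > 0"
    "\<And>u. \<bar>u\<bar> < h \<Longrightarrow> norm (periodic_ext \<gamma> (\<tau> + u) - \<gamma> \<tau> - u *\<^sub>R \<gamma>' \<tau>) \<le> \<kappa> * \<bar>u\<bar>"
proof -
  have approx: "\<exists>d>0. \<forall>y\<in>{0..1}. \<bar>y - s\<bar> < d \<longrightarrow>
      norm (\<gamma> y - \<gamma> s - (y - s) *\<^sub>R \<gamma>' s) \<le> \<kappa> * \<bar>y - s\<bar>" if "s \<in> {0..1}" for s
    using deriv[OF that] \<open>\<kappa> > 0\<close>
    unfolding has_vector_derivative_def has_derivative_within_alt by (simp add: dist_norm)
  show ?thesis
  proof (cases "\<tau> = 0")
    case False
    obtain d where "d > 0" and d: "\<And>y. y \<in> {0..1} \<Longrightarrow> \<bar>y - \<tau>\<bar> < d \<Longrightarrow>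
        norm (\<gamma> y - \<gamma> \<tau> - (y - \<tau>) *\<^sub>R \<gamma>' \<tau>) \<le> \<kappa> * \<bar>y - \<tau>\<bar>"
      using approx[of \<tau>] assms by auto
    show ?thesis
    proof (rule that[of "min d (min \<tau> (1 - \<tau>))"])
      show "0 < min d (min \<tau> (1 - \<tau>))" using \<open>d > 0\<close> assms False by auto
      fix u :: real assume u: "\<bar>u\<bar> < min d (min \<tau> (1 - \<tau>))"
      then show "norm (periodic_ext \<gamma> (\<tau> + u) - \<gamma> \<tau> - u *\<^sub>R \<gamma>' \<tau>) \<le> \<kappa> * \<bar>u\<bar>"
        using d[of "\<tau> + u"] by (simp add: periodic_ext_eq abs_less_iff)
    qed
  next
    case True
    obtain d0 where "d0 > 0" and d0: "\<And>y. y \<in> {0..1} \<Longrightarrow> \<bar>y\<bar> < d0 \<Longrightarrow>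
        norm (\<gamma> y - \<gamma> 0 - y *\<^sub>R \<gamma>' 0) \<le> \<kappa> * \<bar>y\<bar>"
      using approx[of 0] by auto
    obtain d1 where "d1 > 0" and d1: "\<And>y. y \<in> {0..1} \<Longrightarrow> \<bar>y - 1\<bar> < d1 \<Longrightarrow>
        norm (\<gamma> y - \<gamma> 1 - (y - 1) *\<^sub>R \<gamma>' 1) \<le> \<kappa> * \<bar>y - 1\<bar>"
      using approx[of 1] by auto
    show ?thesis
    proof (rule that[of "min d0 (min d1 1)"])
      show "0 < min d0 (min d1 1)" using \<open>d0 > 0\<close> \<open>d1 > 0\<close> by auto
      fix u :: real assume u: "\<bar>u\<bar> < min d0 (min d1 1)"
      show "norm (periodic_ext \<gamma> (\<tau> + u) - \<gamma> \<tau> - u *\<^sub>R \<gamma>' \<tau>) \<le> \<kappa> * \<bar>u\<bar>"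
      proof (cases "u \<ge> 0")
        case True
        then show ?thesis using d0[of u] u \<open>\<tau> = 0\<close> by (simp add: periodic_ext_eq)
      next
        case False
        then show ?thesis using d1[of "u + 1"] u \<open>\<tau> = 0\<close> assms(2,3)
          by (simp add: periodic_ext_neg)
      qed
    qed
  qed
qed

section \<open>The chart at a transverse double point\<close>

locale transverse_double_point =
  fixes \<gamma> \<gamma>' :: "real \<Rightarrow> complex" and t t' :: real
  assumes derivative: "\<And>s. s \<in> {0..1} \<Longrightarrow> (\<gamma> has_vector_derivative \<gamma>' s) (at s within {0..1})"
    and closed: "\<gamma> 0 = \<gamma> 1" and closed_derivative: "\<gamma>' 0 = \<gamma>' 1"
    and params: "0 \<le> t" "t < t'" "t' < 1"
    and double_point: "\<gamma> t = \<gamma> t'"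
    and fibre: "\<And>s. s \<in> {0..<1} \<Longrightarrow> \<gamma> s = \<gamma> t \<Longrightarrow> s = t \<or> s = t'"
    and transversal: "Im (cnj (\<gamma>' t) * \<gamma>' t') \<noteq> 0"
begin

abbreviation "\<Gamma> \<equiv> periodic_ext \<gamma>"

abbreviation "\<alpha> z \<equiv> coord1 (\<gamma>' t) (\<gamma>' t') (z - \<gamma> t)"
abbreviation "\<beta> z \<equiv> coord2 (\<gamma>' t) (\<gamma>' t') (z - \<gamma> t)"

abbreviation "N \<equiv> norm (\<gamma>' t) + norm (\<gamma>' t')"

definition chart_pt :: "real \<Rightarrow> real \<Rightarrow> complex" where
  "chart_pt x y = \<gamma> t + x *\<^sub>R \<gamma>' t + y *\<^sub>R \<gamma>' t'"

lemma chart_pt_coords [simp]: "\<alpha> (chart_pt x y) = x" "\<beta> (chart_pt x y) = y"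
  using coord_basis[OF transversal]
  by (simp_all add: chart_pt_def linear_add[OF linear_coord1] linear_add[OF linear_coord2]
      linear_scale[OF linear_coord1] linear_scale[OF linear_coord2])

lemma chart_pt_of_coords: "chart_pt (\<alpha> z) (\<beta> z) = z"
  using coord_decomp[OF transversal, of "z - \<gamma> t"] by (simp add: chart_pt_def add.assoc)

lemma chart_pt_combination:
  "(1 - \<mu>) *\<^sub>R chart_pt x1 y1 + \<mu> *\<^sub>R chart_pt x2 y2 =
    chart_pt ((1 - \<mu>) * x1 + \<mu> * x2) ((1 - \<mu>) * y1 + \<mu> * y2)"
  by (simp add: chart_pt_def algebra_simps)

lemma coords_combination:
  "\<alpha> ((1 - \<mu>) *\<^sub>R z + \<mu> *\<^sub>R w) = (1 - \<mu>) * \<alpha> z + \<mu> * \<alpha> w"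
  "\<beta> ((1 - \<mu>) *\<^sub>R z + \<mu> *\<^sub>R w) = (1 - \<mu>) * \<beta> z + \<mu> * \<beta> w"
  using chart_pt_combination[of \<mu> "\<alpha> z" "\<beta> z" "\<alpha> w" "\<beta> w"]
  by (simp_all add: chart_pt_of_coords)

lemma norm_chart_pt_le:
  "norm (chart_pt x y - \<gamma> t) \<le> \<bar>x\<bar> * norm (\<gamma>' t) + \<bar>y\<bar> * norm (\<gamma>' t')"
  using norm_triangle_ineq[of "x *\<^sub>R \<gamma>' t" "y *\<^sub>R \<gamma>' t'"] by (simp add: chart_pt_def)

lemma norm_le_coords: "norm (z - \<gamma> t) \<le> \<bar>\<alpha> z\<bar> * norm (\<gamma>' t) + \<bar>\<beta> z\<bar> * norm (\<gamma>' t')"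
  using norm_chart_pt_le[of "\<alpha> z" "\<beta> z"] by (simp add: chart_pt_of_coords)

lemma path_curve: "path \<gamma>"
  unfolding path_def continuous_on_eq_continuous_within
  using derivative has_vector_derivative_continuous by blast

lemma coords_le_if_norm_le:
  assumes "norm e \<le> \<bar>Im (cnj (\<gamma>' t) * \<gamma>' t')\<bar> / (5 * (N + 1)) * \<bar>u\<bar>"
  shows "\<bar>coord1 (\<gamma>' t) (\<gamma>' t') e\<bar> \<le> \<bar>u\<bar> / 5" "\<bar>coord2 (\<gamma>' t) (\<gamma>' t') e\<bar> \<le> \<bar>u\<bar> / 5"
proof -
  define D where "D = \<bar>Im (cnj (\<gamma>' t) * \<gamma>' t')\<bar>"
  define M where "M = N + 1"
  have "D > 0" "M > 0" using transversal by (simp_all add: D_def M_def add_nonneg_pos)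
  have "norm (\<gamma>' t) \<le> M" "norm (\<gamma>' t') \<le> M" by (simp_all add: M_def)
  then have "norm (\<gamma>' t) * norm e / D \<le> M * (D / (5 * M) * \<bar>u\<bar>) / D"
    "norm (\<gamma>' t') * norm e / D \<le> M * (D / (5 * M) * \<bar>u\<bar>) / D"
    using assms \<open>D > 0\<close> \<open>M > 0\<close> unfolding D_def[symmetric] M_def[symmetric]
    by (intro divide_right_mono mult_mono; simp)+
  moreover have "M * (D / (5 * M) * \<bar>u\<bar>) / D = \<bar>u\<bar> / 5"
    using \<open>D > 0\<close> \<open>M > 0\<close> by simp
  ultimately show "\<bar>coord1 (\<gamma>' t) (\<gamma>' t') e\<bar> \<le> \<bar>u\<bar> / 5" "\<bar>coord2 (\<gamma>' t) (\<gamma>' t') e\<bar> \<le> \<bar>u\<bar> / 5"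
    using abs_coord1_le[of "\<gamma>' t" "\<gamma>' t'" e] abs_coord2_le[of "\<gamma>' t" "\<gamma>' t'" e]
    unfolding D_def by linarith+
qed

lemma strands_along_tangents:
  assumes "h0 > 0"
  obtains h where "0 < h" "h < h0"
    "\<And>u. \<bar>u\<bar> < h \<Longrightarrow> \<bar>\<alpha> (\<Gamma> (t + u)) - u\<bar> \<le> \<bar>u\<bar> / 5 \<and> \<bar>\<beta> (\<Gamma> (t + u))\<bar> \<le> \<bar>u\<bar> / 5 \<and>
        \<bar>\<beta> (\<Gamma> (t' + u)) - u\<bar> \<le> \<bar>u\<bar> / 5 \<and> \<bar>\<alpha> (\<Gamma> (t' + u))\<bar> \<le> \<bar>u\<bar> / 5"
proof -
  define \<kappa> where "\<kappa> = \<bar>Im (cnj (\<gamma>' t) * \<gamma>' t')\<bar> / (5 * (N + 1))"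
  have "\<kappa> > 0" using transversal by (simp add: \<kappa>_def add_nonneg_pos)
  obtain h1 where "h1 > 0" and h1: "\<And>u. \<bar>u\<bar> < h1 \<Longrightarrow>
      norm (\<Gamma> (t + u) - \<gamma> t - u *\<^sub>R \<gamma>' t) \<le> \<kappa> * \<bar>u\<bar>"
    by (rule periodic_ext_linear_approx[OF derivative closed closed_derivative, where \<tau> = t])
      (use params \<open>\<kappa> > 0\<close> in auto)
  obtain h2 where "h2 > 0" and h2: "\<And>u. \<bar>u\<bar> < h2 \<Longrightarrow>
      norm (\<Gamma> (t' + u) - \<gamma> t' - u *\<^sub>R \<gamma>' t') \<le> \<kappa> * \<bar>u\<bar>"
    by (rule periodic_ext_linear_approx[OF derivative closed closed_derivative, where \<tau> = t'])
      (use params \<open>\<kappa> > 0\<close> in auto)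
  show ?thesis
  proof (rule that[of "min (h0 / 2) (min h1 h2)"])
    show "0 < min (h0 / 2) (min h1 h2)" "min (h0 / 2) (min h1 h2) < h0"
      using \<open>h1 > 0\<close> \<open>h2 > 0\<close> assms by auto
    fix u :: real assume u: "\<bar>u\<bar> < min (h0 / 2) (min h1 h2)"
    define e1 where "e1 = \<Gamma> (t + u) - \<gamma> t - u *\<^sub>R \<gamma>' t"
    define e2 where "e2 = \<Gamma> (t' + u) - \<gamma> t' - u *\<^sub>R \<gamma>' t'"
    have "\<Gamma> (t + u) - \<gamma> t = u *\<^sub>R \<gamma>' t + e1" "\<Gamma> (t' + u) - \<gamma> t = u *\<^sub>R \<gamma>' t' + e2"
      by (simp_all add: e1_def e2_def double_point)
    then have "\<alpha> (\<Gamma> (t + u)) = u + coord1 (\<gamma>' t) (\<gamma>' t') e1"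
      "\<beta> (\<Gamma> (t + u)) = coord2 (\<gamma>' t) (\<gamma>' t') e1"
      "\<beta> (\<Gamma> (t' + u)) = u + coord2 (\<gamma>' t) (\<gamma>' t') e2"
      "\<alpha> (\<Gamma> (t' + u)) = coord1 (\<gamma>' t) (\<gamma>' t') e2"
      using coord_basis[OF transversal]
      by (simp_all add: linear_add[OF linear_coord1] linear_add[OF linear_coord2]
          linear_scale[OF linear_coord1] linear_scale[OF linear_coord2])
    moreover have "norm e1 \<le> \<kappa> * \<bar>u\<bar>" "norm e2 \<le> \<kappa> * \<bar>u\<bar>"
      using h1 h2 u by (simp_all add: e1_def e2_def)
    ultimately show "\<bar>\<alpha> (\<Gamma> (t + u)) - u\<bar> \<le> \<bar>u\<bar> / 5 \<and> \<bar>\<beta> (\<Gamma> (t + u))\<bar> \<le> \<bar>u\<bar> / 5 \<and>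
        \<bar>\<beta> (\<Gamma> (t' + u)) - u\<bar> \<le> \<bar>u\<bar> / 5 \<and> \<bar>\<alpha> (\<Gamma> (t' + u))\<bar> \<le> \<bar>u\<bar> / 5"
      using coords_le_if_norm_le unfolding \<kappa>_def by simp
  qed
qed

lemma convex_chart_halfplane:
  "convex {w. a * \<alpha> w + b * \<beta> w \<le> c}" "convex {w. a * \<alpha> w + b * \<beta> w < c}"
proof -
  have *: "a * \<alpha> ((1 - \<mu>) *\<^sub>R x + \<mu> *\<^sub>R y) + b * \<beta> ((1 - \<mu>) *\<^sub>R x + \<mu> *\<^sub>R y) =
      (1 - \<mu>) * (a * \<alpha> x + b * \<beta> x) + \<mu> * (a * \<alpha> y + b * \<beta> y)" for x y \<mu>
    unfolding coords_combination by (simp add: algebra_simps)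
  show "convex {w. a * \<alpha> w + b * \<beta> w \<le> c}" "convex {w. a * \<alpha> w + b * \<beta> w < c}"
    unfolding convex_alt mem_Collect_eq *
    by (auto intro!: convex_bound_le convex_bound_lt)
qed

lemma closed_segment_coords:
  assumes "w \<in> closed_segment z z'"
  obtains \<mu> where "0 \<le> \<mu>" "\<mu> \<le> 1"
    "\<alpha> w = (1 - \<mu>) * \<alpha> z + \<mu> * \<alpha> z'" "\<beta> w = (1 - \<mu>) * \<beta> z + \<mu> * \<beta> z'"
  using assms coords_combination by (auto simp: closed_segment_def)

lemma small_scale_exists:
  assumes "0 < c" "0 < \<epsilon>"
  obtains \<sigma> where "0 < \<sigma>" "\<sigma> \<le> c" "\<sigma> * N < \<epsilon>"
proof
  define M where "M = N + 1"
  have "0 < M" by (simp add: M_def add_nonneg_pos)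
  define \<sigma> where "\<sigma> = min c (\<epsilon> / (2 * M))"
  show "0 < \<sigma>" "\<sigma> \<le> c" using assms \<open>0 < M\<close> by (simp_all add: \<sigma>_def)
  have "\<sigma> * M \<le> \<epsilon> / (2 * M) * M"
    unfolding \<sigma>_def using \<open>0 < M\<close> by (intro mult_right_mono) simp_all
  also have "\<dots> = \<epsilon> / 2" using \<open>0 < M\<close> by simp
  finally have "\<sigma> * N + \<sigma> \<le> \<epsilon> / 2" by (simp add: M_def algebra_simps)
  then show "\<sigma> * N < \<epsilon>" using \<open>0 < \<sigma>\<close> assms by simp
qed

lemma near_if_coords_small:
  assumes "\<bar>\<alpha> w\<bar> \<le> c" "\<bar>\<beta> w\<bar> \<le> c" "c * N < r"
  shows "norm (w - \<gamma> t) < r"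
proof -
  have "norm (w - \<gamma> t) \<le> \<bar>\<alpha> w\<bar> * norm (\<gamma>' t) + \<bar>\<beta> w\<bar> * norm (\<gamma>' t')"
    by (rule norm_le_coords)
  also have "\<dots> \<le> c * N"
    using assms by (simp add: distrib_left add_mono mult_right_mono)
  finally show ?thesis using assms(3) by simp
qed

end

context transverse_double_point
begin

lemma double_point_params:
  assumes "s \<in> {0..1}" "\<gamma> s = \<gamma> t"
  shows "s = t \<or> s = t' \<or> (t = 0 \<and> s = 1)"
proof (cases "s = 1")
  case True
  then have "\<gamma> 0 = \<gamma> t" using assms closed by simp
  then show ?thesis using fibre[of 0] params True by auto
next
  case False
  then show ?thesis using fibre[of s] assms by auto
qed

lemma near_double_point_params:
  assumes "h > 0"
  obtains r where "r > 0" "\<And>s. s \<in> {0..1} \<Longrightarrow> norm (\<gamma> s - \<gamma> t) < r \<Longrightarrow>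
      \<bar>s - t\<bar> < h \<or> \<bar>s - t'\<bar> < h \<or> (t = 0 \<and> \<bar>s - 1\<bar> < h)"
proof -
  define K where "K = {s\<in>{0..1}. h \<le> \<bar>s - t\<bar> \<and> h \<le> \<bar>s - t'\<bar> \<and> (t = 0 \<longrightarrow> h \<le> \<bar>s - 1\<bar>)}"
  have "K = {0..1} \<inter> {s. h \<le> \<bar>s - t\<bar>} \<inter> {s. h \<le> \<bar>s - t'\<bar>} \<inter> {s. t = 0 \<longrightarrow> h \<le> \<bar>s - 1\<bar>}"
    by (auto simp: K_def)
  moreover have "closed {s::real. h \<le> \<bar>s - t\<bar>}" "closed {s::real. h \<le> \<bar>s - t'\<bar>}"
    by (intro closed_Collect_le continuous_intros)+
  moreover have "closed {s::real. t = 0 \<longrightarrow> h \<le> \<bar>s - 1\<bar>}"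
  proof (cases "t = 0")
    case True then show ?thesis by simp (intro closed_Collect_le continuous_intros)
  qed simp
  ultimately have "closed K" by (auto intro!: closed_Int)
  moreover have "bounded K" by (rule bounded_subset[of "{0..1}"]) (auto simp: K_def)
  ultimately have "compact K" by (simp add: compact_eq_bounded_closed)
  moreover have "continuous_on K \<gamma>"
    using path_curve unfolding path_def by (rule continuous_on_subset) (auto simp: K_def)
  ultimately have "compact (\<gamma> ` K)" using compact_continuous_image by blast
  then have cl: "closed (\<gamma> ` K)" by (rule compact_imp_closed)
  have nin: "\<gamma> t \<notin> \<gamma> ` K"
  proof
    assume "\<gamma> t \<in> \<gamma> ` K"
    then obtain s where s: "s \<in> K" "\<gamma> s = \<gamma> t" by auto
    then have "s \<in> {0..1}" by (simp add: K_def)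
    with s have "s = t \<or> s = t' \<or> (t = 0 \<and> s = 1)" by (intro double_point_params)
    then show False using s assms by (auto simp: K_def)
  qed
  obtain d where "d > 0" and d: "\<forall>x\<in>\<gamma> ` K. d \<le> dist (\<gamma> t) x"
    using separate_point_closed[OF cl nin] by blast
  show ?thesis
  proof (rule that[OF \<open>d > 0\<close>])
    fix s assume s: "s \<in> {0..1}" "norm (\<gamma> s - \<gamma> t) < d"
    show "\<bar>s - t\<bar> < h \<or> \<bar>s - t'\<bar> < h \<or> (t = 0 \<and> \<bar>s - 1\<bar> < h)"
    proof (rule ccontr)
      assume "\<not> ?thesis"
      then have "s \<in> K" using s by (auto simp: K_def)
      then have "d \<le> dist (\<gamma> t) (\<gamma> s)" using d by auto
      then show False using s by (simp add: dist_norm norm_minus_commute)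
    qed
  qed
qed

end

locale double_point_chart = transverse_double_point +
  fixes h r :: real
  assumes h_pos: "h > 0" and r_pos: "r > 0"
    and h_small: "h < (t' - t) / 2" "h < 1 - t'"
    and strands: "\<And>u. \<bar>u\<bar> < h \<Longrightarrow>
      \<bar>\<alpha> (\<Gamma> (t + u)) - u\<bar> \<le> \<bar>u\<bar> / 5 \<and> \<bar>\<beta> (\<Gamma> (t + u))\<bar> \<le> \<bar>u\<bar> / 5 \<and>
      \<bar>\<beta> (\<Gamma> (t' + u)) - u\<bar> \<le> \<bar>u\<bar> / 5 \<and> \<bar>\<alpha> (\<Gamma> (t' + u))\<bar> \<le> \<bar>u\<bar> / 5"
    and near: "\<And>s. s \<in> {0..1} \<Longrightarrow> norm (\<gamma> s - \<gamma> t) < r \<Longrightarrow>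
      \<bar>s - t\<bar> < h \<or> \<bar>s - t'\<bar> < h \<or> (t = 0 \<and> \<bar>s - 1\<bar> < h)"

lemma (in transverse_double_point) double_point_chart_exists:
  obtains h r where "double_point_chart \<gamma> \<gamma>' t t' h r"
proof -
  obtain h where h: "0 < h" "h < min ((t' - t) / 2) (1 - t')" and strands:
    "\<And>u. \<bar>u\<bar> < h \<Longrightarrow> \<bar>\<alpha> (\<Gamma> (t + u)) - u\<bar> \<le> \<bar>u\<bar> / 5 \<and> \<bar>\<beta> (\<Gamma> (t + u))\<bar> \<le> \<bar>u\<bar> / 5 \<and>
        \<bar>\<beta> (\<Gamma> (t' + u)) - u\<bar> \<le> \<bar>u\<bar> / 5 \<and> \<bar>\<alpha> (\<Gamma> (t' + u))\<bar> \<le> \<bar>u\<bar> / 5"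
    by (rule strands_along_tangents[of "min ((t' - t) / 2) (1 - t')"]) (use params in auto)
  obtain r where r: "r > 0" and near: "\<And>s. s \<in> {0..1} \<Longrightarrow> norm (\<gamma> s - \<gamma> t) < r \<Longrightarrow>
      \<bar>s - t\<bar> < h \<or> \<bar>s - t'\<bar> < h \<or> (t = 0 \<and> \<bar>s - 1\<bar> < h)"
    using near_double_point_params[OF \<open>0 < h\<close>] by blast
  have "double_point_chart \<gamma> \<gamma>' t t' h r"
  proof (intro double_point_chart.intro double_point_chart_axioms.intro)
    show "transverse_double_point \<gamma> \<gamma>' t t'" by (rule transverse_double_point_axioms)
    show "0 < h" "0 < r" "h < (t' - t) / 2" "h < 1 - t'" using h r by simp_all
  qed (fact strands near)+
  then show ?thesis by (rule that)
qed

context double_point_chart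
begin

lemma first_strand_after:
  assumes "0 \<le> u" "u < h" "\<Gamma> (t + u) = w"
  shows "4 * u / 5 \<le> \<alpha> w" "\<bar>\<beta> w\<bar> \<le> u / 5"
proof -
  have "\<bar>\<alpha> w - u\<bar> \<le> u / 5" "\<bar>\<beta> w\<bar> \<le> u / 5" using strands[of u] assms by auto
  then show "4 * u / 5 \<le> \<alpha> w" "\<bar>\<beta> w\<bar> \<le> u / 5" by arith+
qed

lemma first_strand_before:
  assumes "0 \<le> d" "d < h" "\<Gamma> (t - d) = w"
  shows "-6 * d / 5 \<le> \<alpha> w" "\<alpha> w \<le> -4 * d / 5" "\<bar>\<beta> w\<bar> \<le> d / 5"
proof -
  have "\<bar>\<alpha> w + d\<bar> \<le> d / 5" "\<bar>\<beta> w\<bar> \<le> d / 5" using strands[of "-d"] assms by auto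
  then show "-6 * d / 5 \<le> \<alpha> w" "\<alpha> w \<le> -4 * d / 5" "\<bar>\<beta> w\<bar> \<le> d / 5" by arith+
qed

lemma second_strand_after:
  assumes "0 \<le> u" "u < h" "\<Gamma> (t' + u) = w"
  shows "4 * u / 5 \<le> \<beta> w" "\<beta> w \<le> 6 * u / 5" "\<bar>\<alpha> w\<bar> \<le> u / 5"
proof -
  have "\<bar>\<beta> w - u\<bar> \<le> u / 5" "\<bar>\<alpha> w\<bar> \<le> u / 5" using strands[of u] assms by auto
  then show "4 * u / 5 \<le> \<beta> w" "\<beta> w \<le> 6 * u / 5" "\<bar>\<alpha> w\<bar> \<le> u / 5" by arith+
qed

lemma second_strand_before:
  assumes "0 \<le> d" "d < h" "\<Gamma> (t' - d) = w"
  shows "\<beta> w \<le> -4 * d / 5" "\<bar>\<alpha> w\<bar> \<le> d / 5"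
proof -
  have "\<bar>\<beta> w + d\<bar> \<le> d / 5" "\<bar>\<alpha> w\<bar> \<le> d / 5" using strands[of "-d"] assms by auto
  then show "\<beta> w \<le> -4 * d / 5" "\<bar>\<alpha> w\<bar> \<le> d / 5" by arith+
qed

lemma loop_near_double_point:
  assumes "w \<in> \<gamma> ` {t..t'}" "norm (w - \<gamma> t) < r"
  shows "(0 \<le> \<alpha> w \<and> \<bar>\<beta> w\<bar> \<le> \<alpha> w / 4) \<or> (\<beta> w \<le> 0 \<and> \<bar>\<alpha> w\<bar> \<le> - \<beta> w / 4)"
proof -
  obtain s where s: "t \<le> s" "s \<le> t'" "w = \<gamma> s" using assms by auto
  then have "s \<in> {0..1}" using params by auto
  then consider "\<bar>s - t\<bar> < h" | "\<bar>s - t'\<bar> < h" | "t = 0" "\<bar>s - 1\<bar> < h"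
    using near assms(2) s(3) by blast
  then show ?thesis
  proof cases
    case 1
    define u where "u = s - t"
    have "0 \<le> u" "u < h" using 1 s by (simp_all add: u_def)
    moreover have "\<Gamma> (t + u) = w" using s params by (simp add: u_def periodic_ext_eq)
    ultimately have "4 * u / 5 \<le> \<alpha> w" "\<bar>\<beta> w\<bar> \<le> u / 5" by (rule first_strand_after)+
    then show ?thesis using \<open>0 \<le> u\<close> by (intro disjI1 conjI) linarith+
  next
    case 2
    define d where "d = t' - s"
    have "0 \<le> d" "d < h" using 2 s by (simp_all add: d_def)
    moreover have "\<Gamma> (t' - d) = w" using s params by (simp add: d_def periodic_ext_eq)
    ultimately have "\<beta> w \<le> -4 * d / 5" "\<bar>\<alpha> w\<bar> \<le> d / 5" by (rule second_strand_before)+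
    then show ?thesis using \<open>0 \<le> d\<close> by (intro disjI2 conjI) linarith+
  next
    case 3
    then show ?thesis using s h_small by (simp add: abs_less_iff)
  qed
qed

lemma first_strand_cone: "\<bar>u\<bar> < h \<Longrightarrow> \<bar>\<beta> (\<Gamma> (t + u))\<bar> \<le> \<bar>\<alpha> (\<Gamma> (t + u))\<bar> / 4"
  using strands[of u] by arith

lemma second_strand_cone: "\<bar>u\<bar> < h \<Longrightarrow> \<bar>\<alpha> (\<Gamma> (t' + u))\<bar> \<le> \<bar>\<beta> (\<Gamma> (t' + u))\<bar> / 4"
  using strands[of u] by arith

lemma curve_near_double_point:
  assumes "w \<in> path_image \<gamma>" "norm (w - \<gamma> t) < r"
  shows "\<bar>\<beta> w\<bar> \<le> \<bar>\<alpha> w\<bar> / 4 \<or> \<bar>\<alpha> w\<bar> \<le> \<bar>\<beta> w\<bar> / 4"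
proof -
  obtain s where s: "s \<in> {0..1}" "w = \<gamma> s" using assms by (auto simp: path_image_def)
  consider "\<bar>s - t\<bar> < h" | "\<bar>s - t'\<bar> < h" | "t = 0" "\<bar>s - 1\<bar> < h"
    using near[OF s(1)] assms(2) s(2) by blast
  then show ?thesis
  proof cases
    case 1
    then have "\<Gamma> (t + (s - t)) = w" using s h_small params by (simp add: periodic_ext_eq abs_less_iff)
    then show ?thesis using first_strand_cone[OF 1] by simp
  next
    case 2
    then have "\<Gamma> (t' + (s - t')) = w" using s h_small by (simp add: periodic_ext_eq abs_less_iff)
    then show ?thesis using second_strand_cone[OF 2] by simp
  next
    case 3
    have "\<Gamma> (t + (s - 1)) = w"
    proof (cases "s = 1")
      case True
      then show ?thesis using 3 s closed by (simp add: periodic_ext_eq)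
    next
      case False
      then show ?thesis using 3 s h_small params by (simp add: periodic_ext_neg abs_less_iff)
    qed
    then show ?thesis using first_strand_cone[OF 3(2)] by simp
  qed
qed

lemma tail_near_double_point:
  assumes "t = 0" "0 < e" "e < h" "w \<in> \<gamma> ` {t'..1 - e}" "norm (w - \<gamma> t) < r"
  shows "(0 \<le> \<beta> w \<and> \<bar>\<alpha> w\<bar> \<le> \<beta> w / 4) \<or> (\<alpha> w \<le> -4 * e / 5 \<and> \<bar>\<beta> w\<bar> \<le> - \<alpha> w / 4)"
proof -
  obtain s where s: "t' \<le> s" "s \<le> 1 - e" "w = \<gamma> s" using assms by auto
  then have "s \<in> {0..1}" using params assms by auto
  then consider "\<bar>s - t\<bar> < h" | "\<bar>s - t'\<bar> < h" | "\<bar>s - 1\<bar> < h"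
    using near assms(5) s(3) by blast
  then show ?thesis
  proof cases
    case 1
    then show ?thesis using s assms(1) h_small by (simp add: abs_less_iff)
  next
    case 2
    define u where "u = s - t'"
    have "0 \<le> u" "u < h" using 2 s by (simp_all add: u_def)
    moreover have "\<Gamma> (t' + u) = w" using s assms params by (simp add: u_def periodic_ext_eq)
    ultimately have "4 * u / 5 \<le> \<beta> w" "\<bar>\<alpha> w\<bar> \<le> u / 5" by (rule second_strand_after)+
    then show ?thesis using \<open>0 \<le> u\<close> by (intro disjI1 conjI) linarith+
  next
    case 3
    define d where "d = 1 - s"
    have "e \<le> d" "0 \<le> d" "d < h" using 3 s \<open>0 < e\<close> by (simp_all add: d_def)
    moreover have "\<Gamma> (t - d) = w"
      using s assms \<open>d < h\<close> h_small params by (simp add: d_def periodic_ext_neg)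
    ultimately have "\<alpha> w \<le> -4 * d / 5" "\<bar>\<beta> w\<bar> \<le> d / 5"
      using first_strand_before[of d w] by simp_all
    then show ?thesis using \<open>e \<le> d\<close> by (intro disjI2 conjI) linarith+
  qed
qed

end

section \<open>The wedge lies outside the loop\<close>

context double_point_chart
begin

(* The quadrant between the edge arriving at parameter t (along -\<gamma>' t) and the edge
   leaving at parameter t' (along \<gamma>' t'). *)
definition wedge :: "complex set" where
  "wedge = {w. \<alpha> w < 0 \<and> 0 < \<beta> w \<and> norm (w - \<gamma> t) < r}"

lemma convex_wedge: "convex wedge"
proof -
  have "convex {w. \<alpha> w < 0}" using convex_chart_halfplane(2)[of 1 0 0] by simp
  moreover have "convex {w. 0 < \<beta> w}" using convex_chart_halfplane(2)[of 0 "-1" 0] by simp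
  moreover have "wedge = {w. \<alpha> w < 0} \<inter> {w. 0 < \<beta> w} \<inter> ball (\<gamma> t) r"
    by (auto simp: wedge_def dist_norm norm_minus_commute)
  ultimately show ?thesis by (simp add: convex_Int)
qed

lemma wedge_disjoint_loop: "wedge \<inter> \<gamma> ` {t..t'} = {}"
  using loop_near_double_point by (fastforce simp: wedge_def)

lemma wedge_nonempty: "wedge \<noteq> {}"
proof -
  obtain c where "0 < c" "c \<le> 1" "c * N < r" using small_scale_exists[OF _ r_pos, of 1] by auto
  then have "chart_pt (- c) c \<in> wedge"
    using near_if_coords_small[of "chart_pt (- c) c" c] by (simp add: wedge_def)
  then show ?thesis by blast
qed

lemma wedge_connected_component:
  "z \<in> wedge \<Longrightarrow> w \<in> wedge \<Longrightarrow> connected_component (- \<gamma> ` {t..t'}) z w"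
  using wedge_disjoint_loop by (intro connected_componentI[OF convex_connected[OF convex_wedge]]) auto

lemma arriving_edge_connected_to_wedge:
  assumes "0 < \<delta>" "\<delta> < h" "3 * \<delta> * N < r" "z \<in> wedge"
  shows "connected_component (- \<gamma> ` {t..t'}) z (\<Gamma> (t - \<delta>))"
proof -
  have small: "norm (w - \<gamma> t) < r" if "\<bar>\<alpha> w\<bar> \<le> 3 * \<delta>" "\<bar>\<beta> w\<bar> \<le> 3 * \<delta>" for w
    using near_if_coords_small[OF that] assms(3) by simp
  define p where "p = \<Gamma> (t - \<delta>)"
  define p' where "p' = chart_pt (\<alpha> p) (\<beta> p + 2 * \<delta>)"
  have p: "-6 * \<delta> / 5 \<le> \<alpha> p" "\<alpha> p \<le> -4 * \<delta> / 5" "- \<delta> / 5 \<le> \<beta> p" "\<beta> p \<le> \<delta> / 5"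
    using first_strand_before[of \<delta> p] assms unfolding abs_le_iff by (auto simp: p_def)
  have segment: "closed_segment p p' \<subseteq> - \<gamma> ` {t..t'}"
  proof
    fix w assume "w \<in> closed_segment p p'"
    then obtain \<mu> where \<mu>: "0 \<le> \<mu>" "\<mu> \<le> 1" "\<alpha> w = \<alpha> p" "\<beta> w = \<beta> p + 2 * (\<mu> * \<delta>)"
      by (rule closed_segment_coords) (auto simp: p'_def algebra_simps)
    moreover have "0 \<le> \<mu> * \<delta>" "\<mu> * \<delta> \<le> \<delta>" using \<mu> assms by (auto simp: mult_left_le_one_le)
    ultimately have "norm (w - \<gamma> t) < r"
      using p assms by (intro small; unfold abs_le_iff; intro conjI; linarith)
    show "w \<in> - \<gamma> ` {t..t'}"
    proof
      assume "w \<in> \<gamma> ` {t..t'}"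
      from loop_near_double_point[OF this \<open>norm (w - \<gamma> t) < r\<close>] show False
        using \<mu> p \<open>0 \<le> \<mu> * \<delta>\<close> abs_ge_minus_self[of "\<alpha> w"] assms
        by (elim disjE conjE; linarith)
    qed
  qed
  have "p' \<in> wedge"
    using p assms small[of p'] by (auto simp: wedge_def p'_def)
  with assms(4) have "connected_component (- \<gamma> ` {t..t'}) z p'" by (rule wedge_connected_component)
  moreover have "connected_component (- \<gamma> ` {t..t'}) p' p"
    using connected_componentI[OF connected_segment segment ends_in_segment(2,1)] .
  ultimately show ?thesis unfolding p_def by (rule connected_component_trans)
qed

lemma leaving_edge_connected_to_wedge:
  assumes "0 < \<delta>" "\<delta> < h" "3 * \<delta> * N < r" "z \<in> wedge"
  shows "connected_component (- \<gamma> ` {t..t'}) z (\<Gamma> (t' + \<delta>))"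
proof -
  have small: "norm (w - \<gamma> t) < r" if "\<bar>\<alpha> w\<bar> \<le> 3 * \<delta>" "\<bar>\<beta> w\<bar> \<le> 3 * \<delta>" for w
    using near_if_coords_small[OF that] assms(3) by simp
  define q where "q = \<Gamma> (t' + \<delta>)"
  define q' where "q' = chart_pt (\<alpha> q - 2 * \<delta>) (\<beta> q)"
  have q: "4 * \<delta> / 5 \<le> \<beta> q" "\<beta> q \<le> 6 * \<delta> / 5" "- \<delta> / 5 \<le> \<alpha> q" "\<alpha> q \<le> \<delta> / 5"
    using second_strand_after[of \<delta> q] assms unfolding abs_le_iff by (auto simp: q_def)
  have segment: "closed_segment q q' \<subseteq> - \<gamma> ` {t..t'}"
  proof
    fix w assume "w \<in> closed_segment q q'"
    then obtain \<mu> where \<mu>: "0 \<le> \<mu>" "\<mu> \<le> 1" "\<alpha> w = \<alpha> q - 2 * (\<mu> * \<delta>)" "\<beta> w = \<beta> q"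
      by (rule closed_segment_coords) (auto simp: q'_def algebra_simps)
    moreover have "0 \<le> \<mu> * \<delta>" "\<mu> * \<delta> \<le> \<delta>" using \<mu> assms by (auto simp: mult_left_le_one_le)
    ultimately have "norm (w - \<gamma> t) < r"
      using q assms by (intro small; unfold abs_le_iff; intro conjI; linarith)
    show "w \<in> - \<gamma> ` {t..t'}"
    proof
      assume "w \<in> \<gamma> ` {t..t'}"
      from loop_near_double_point[OF this \<open>norm (w - \<gamma> t) < r\<close>] show False
        using \<mu> q \<open>0 \<le> \<mu> * \<delta>\<close> abs_ge_self[of "\<beta> w"] assms
        by (elim disjE conjE; linarith)
    qed
  qed
  have "q' \<in> wedge"
    using q assms small[of q'] by (auto simp: wedge_def q'_def)
  with assms(4) have "connected_component (- \<gamma> ` {t..t'}) z q'" by (rule wedge_connected_component)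
  moreover have "connected_component (- \<gamma> ` {t..t'}) q' q"
    using connected_componentI[OF connected_segment segment ends_in_segment(2,1)] .
  ultimately show ?thesis unfolding q_def by (rule connected_component_trans)
qed

lemma strand_ends_connected_to_wedge:
  obtains \<epsilon> where "0 < \<epsilon>" "\<And>\<delta> z. 0 < \<delta> \<Longrightarrow> \<delta> < \<epsilon> \<Longrightarrow> z \<in> wedge \<Longrightarrow>
    connected_component (- \<gamma> ` {t..t'}) z (\<Gamma> (t - \<delta>)) \<and>
    connected_component (- \<gamma> ` {t..t'}) z (\<Gamma> (t' + \<delta>))"
proof
  show "0 < min h (r / (3 * N + 1))" using h_pos r_pos by (simp add: add_nonneg_pos)
  fix \<delta> z assume \<delta>: "0 < \<delta>" "\<delta> < min h (r / (3 * N + 1))" and "z \<in> wedge"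
  have "3 * \<delta> * N \<le> \<delta> * (3 * N + 1)" using \<delta> by (simp add: algebra_simps)
  also have "\<dots> < r" using \<delta> by (simp add: pos_less_divide_eq add_nonneg_pos)
  finally show "connected_component (- \<gamma> ` {t..t'}) z (\<Gamma> (t - \<delta>)) \<and>
      connected_component (- \<gamma> ` {t..t'}) z (\<Gamma> (t' + \<delta>))"
    using \<delta> \<open>z \<in> wedge\<close> arriving_edge_connected_to_wedge leaving_edge_connected_to_wedge by simp
qed

lemma outwards_loop_if_wedge_outside:
  assumes "is_loop \<gamma> t t'" "z \<in> wedge" "z \<notin> inside (\<gamma> ` {t..t'})"
  shows "outwards_loop \<gamma> t t'"
proof -
  obtain \<epsilon> where "0 < \<epsilon>" and \<epsilon>: "\<And>\<delta> z. 0 < \<delta> \<Longrightarrow> \<delta> < \<epsilon> \<Longrightarrow> z \<in> wedge \<Longrightarrow>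
      connected_component (- \<gamma> ` {t..t'}) z (\<Gamma> (t - \<delta>)) \<and>
      connected_component (- \<gamma> ` {t..t'}) z (\<Gamma> (t' + \<delta>))"
    using strand_ends_connected_to_wedge by blast
  have image: "path_image (direct_split \<gamma> t t') = \<gamma> ` {t..t'}"
    using params by (simp add: direct_split_def path_image_subpath)
  have outside: "x \<notin> inside (\<gamma> ` {t..t'})" if "connected_component (- \<gamma> ` {t..t'}) z x" for x
    using inside_same_component[OF connected_component_sym[OF that]] assms(3) by blast
  show ?thesis
    unfolding outwards_loop_def image
    using assms(1,2) \<open>0 < \<epsilon>\<close> \<epsilon> outside by blast
qed

end

lemma closure_outside_Int_inside:
  fixes S T :: "'a::real_normed_vector set"
  assumes "closed S" "S \<subseteq> T"
  shows "closure (outside T) \<inter> inside S = {}"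
proof -
  have "inside S \<inter> outside T = {}"
    using outside_mono[OF assms(2)] inside_Int_outside[of S] by blast
  then show ?thesis
    using open_Int_closure_eq_empty[OF open_inside[OF assms(1)]] by blast
qed

lemma (in transverse_double_point) start_not_inside_loop:
  assumes "\<gamma> 0 \<in> closure (ext_face \<gamma>)"
  shows "\<gamma> 0 \<notin> inside (\<gamma> ` {t..t'})"
proof -
  have "continuous_on {t..t'} \<gamma>"
    using path_curve unfolding path_def by (rule continuous_on_subset) (use params in auto)
  then have "closed (\<gamma> ` {t..t'})" by (intro compact_imp_closed compact_continuous_image) auto
  moreover have "\<gamma> ` {t..t'} \<subseteq> path_image \<gamma>" using params by (auto simp: path_image_def)
  ultimately show ?thesis
    using closure_outside_Int_inside assms unfolding ext_face_def by blast
qed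

context double_point_chart
begin

lemma wedge_outside_loop_if_start_outside:
  assumes "0 < t"
    and no_earlier: "\<And>\<sigma> \<tau>. 0 \<le> \<sigma> \<Longrightarrow> \<sigma> < \<tau> \<Longrightarrow> \<tau> \<le> t' \<Longrightarrow> \<gamma> \<sigma> = \<gamma> \<tau> \<Longrightarrow> \<sigma> = t"
    and "\<gamma> 0 \<notin> inside (\<gamma> ` {t..t'})" "z \<in> wedge"
  shows "z \<notin> inside (\<gamma> ` {t..t'})"
proof
  assume z: "z \<in> inside (\<gamma> ` {t..t'})"
  obtain \<epsilon> where "0 < \<epsilon>" and \<epsilon>: "\<And>\<delta> z. 0 < \<delta> \<Longrightarrow> \<delta> < \<epsilon> \<Longrightarrow> z \<in> wedge \<Longrightarrow>
      connected_component (- \<gamma> ` {t..t'}) z (\<Gamma> (t - \<delta>))"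
    using strand_ends_connected_to_wedge by metis
  define \<delta> where "\<delta> = min (t / 2) (\<epsilon> / 2)"
  have \<delta>: "0 < \<delta>" "\<delta> < \<epsilon>" "\<delta> < t" using \<open>0 < t\<close> \<open>0 < \<epsilon>\<close> by (auto simp: \<delta>_def)
  have "\<Gamma> (t - \<delta>) = \<gamma> (t - \<delta>)" using \<delta> params by (simp add: periodic_ext_eq)
  then have inside: "\<gamma> (t - \<delta>) \<in> inside (\<gamma> ` {t..t'})"
    using inside_same_component[OF \<epsilon>[OF \<delta>(1,2) \<open>z \<in> wedge\<close>] z] by simp
  have "\<gamma> ` {0..t - \<delta>} \<subseteq> - \<gamma> ` {t..t'}"
  proof clarify
    fix \<sigma> \<tau> assume "\<sigma> \<in> {0..t - \<delta>}" "\<tau> \<in> {t..t'}" "\<gamma> \<sigma> = \<gamma> \<tau>"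
    then show False using no_earlier[of \<sigma> \<tau>] \<delta> by auto
  qed
  moreover have "continuous_on {0..t - \<delta>} \<gamma>"
    using path_curve unfolding path_def by (rule continuous_on_subset) (use params \<delta> in auto)
  ultimately have "connected_component (- \<gamma> ` {t..t'}) (\<gamma> (t - \<delta>)) (\<gamma> 0)"
    using \<delta> by (intro connected_componentI[OF connected_continuous_image]) auto
  with inside show False
    using inside_same_component assms(3) by blast
qed

end

section \<open>A double point at the basepoint\<close>

lemma Im_mult_cnj_eq_0_if_in_closed_segment:
  assumes "z \<in> closed_segment a b"
  shows "Im ((b - a) * cnj (b - z)) = 0"
proof -
  obtain u where "z = (1 - u) *\<^sub>R a + u *\<^sub>R b" using assms by (auto simp: closed_segment_def)
  then have "b - z = of_real (1 - u) * (b - a)" by (simp add: scaleR_conv_of_real algebra_simps)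
  then have "cnj (b - z) = of_real (1 - u) * cnj (b - a)" by simp
  then have "(b - a) * cnj (b - z) = of_real (1 - u) * ((b - a) * cnj (b - a))"
    by (simp only: mult.left_commute)
  also have "(b - a) * cnj (b - a) = of_real ((norm (b - a))\<^sup>2)"
    by (rule complex_norm_square[symmetric])
  finally show ?thesis by simp
qed

context transverse_double_point
begin

lemma Im_mult_cnj_diff:
  "Im ((b - a) * cnj (d - c)) = Im (cnj (\<gamma>' t) * \<gamma>' t') *
    ((\<beta> b - \<beta> a) * (\<alpha> d - \<alpha> c) - (\<alpha> b - \<alpha> a) * (\<beta> d - \<beta> c))"
proof -
  have "b - a = (b - \<gamma> t) - (a - \<gamma> t)" "d - c = (d - \<gamma> t) - (c - \<gamma> t)" by simp_all
  then show ?thesis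
    using Im_mult_cnj_coord[OF transversal, of "b - a" "d - c"]
    by (simp only: linear_diff[OF linear_coord1] linear_diff[OF linear_coord2])
qed

lemma winding_number_linepath_sign:
  assumes "0 < (\<beta> b - \<beta> a) * (\<alpha> b - \<alpha> z) - (\<alpha> b - \<alpha> a) * (\<beta> b - \<beta> z)"
  shows "z \<notin> closed_segment a b"
    and "0 < Im (cnj (\<gamma>' t) * \<gamma>' t') \<Longrightarrow> 0 < Re (winding_number (linepath a b) z)"
    and "Im (cnj (\<gamma>' t) * \<gamma>' t') < 0 \<Longrightarrow> Re (winding_number (linepath a b) z) < 0"
proof -
  have ab: "Im ((b - a) * cnj (b - z)) =
      Im (cnj (\<gamma>' t) * \<gamma>' t') * ((\<beta> b - \<beta> a) * (\<alpha> b - \<alpha> z) - (\<alpha> b - \<alpha> a) * (\<beta> b - \<beta> z))"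
    by (rule Im_mult_cnj_diff)
  have "Im ((a - b) * cnj (a - z)) =
      Im (cnj (\<gamma>' t) * \<gamma>' t') * ((\<beta> a - \<beta> b) * (\<alpha> a - \<alpha> z) - (\<alpha> a - \<alpha> b) * (\<beta> a - \<beta> z))"
    by (rule Im_mult_cnj_diff)
  then have ba: "Im ((a - b) * cnj (a - z)) =
      - Im (cnj (\<gamma>' t) * \<gamma>' t') * ((\<beta> b - \<beta> a) * (\<alpha> b - \<alpha> z) - (\<alpha> b - \<alpha> a) * (\<beta> b - \<beta> z))"
    by (simp add: algebra_simps)
  show "z \<notin> closed_segment a b"
    using Im_mult_cnj_eq_0_if_in_closed_segment[of z a b] ab assms transversal by auto
  show "0 < Re (winding_number (linepath a b) z)" if "0 < Im (cnj (\<gamma>' t) * \<gamma>' t')"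
    using that assms ab by (intro winding_number_linepath_pos_lt) simp
  show "Re (winding_number (linepath a b) z) < 0" if "Im (cnj (\<gamma>' t) * \<gamma>' t') < 0"
    using that assms ba by (intro winding_number_linepath_neg_lt) (simp add: mult_neg_pos)
qed

end

(* A double point at the basepoint, seen at scale e: z1 and z2 lie on either side of the edge
   arriving at the basepoint, on which back_pt lies, and top_pt lies on the leaving edge. *)
locale basepoint_double_point = double_point_chart +
  fixes e :: real
  assumes t_zero: "t = 0" and e_pos: "0 < e" and e_less: "e < h" and e_small: "e * N < r"
begin

definition z1 :: complex where "z1 = chart_pt (- e / 2) (- e / 2)"
definition z2 :: complex where "z2 = chart_pt (- e / 2) (e / 2)"
definition back_pt :: complex where "back_pt = \<gamma> (1 - e)"
definition top_pt :: complex where "top_pt = chart_pt 0 (2 * e)"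
definition cone :: "complex set" where "cone = {w. \<alpha> w \<le> 0 \<and> \<bar>\<beta> w\<bar> \<le> - \<alpha> w / 4}"

lemma e_less_tail: "e < 1 - t'"
  using e_less h_small by simp

lemma near_if_coords_le_half: "\<bar>\<alpha> w\<bar> \<le> e / 2 \<Longrightarrow> \<bar>\<beta> w\<bar> \<le> e / 2 \<Longrightarrow> norm (w - \<gamma> t) < r"
  using near_if_coords_small[of w "e / 2" r] e_small r_pos by simp

lemma first_strand_end_coords:
  assumes "0 \<le> d" "d \<le> e"
  shows "\<alpha> (\<gamma> (1 - d)) \<le> -4 * d / 5" "\<bar>\<beta> (\<gamma> (1 - d))\<bar> \<le> d / 5"
proof -
  have "\<Gamma> (t - d) = \<gamma> (1 - d)"
  proof (cases "d = 0")
    case True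
    then show ?thesis using t_zero closed by (simp add: periodic_ext_eq)
  next
    case False
    then show ?thesis
      using assms t_zero e_less_tail params by (simp add: periodic_ext_neg)
  qed
  moreover have "d < h" using assms e_less by simp
  ultimately show "\<alpha> (\<gamma> (1 - d)) \<le> -4 * d / 5" "\<bar>\<beta> (\<gamma> (1 - d))\<bar> \<le> d / 5"
    using first_strand_before[OF assms(1)] by simp_all
qed

lemma back_pt_coords: "\<alpha> back_pt \<le> -4 * e / 5" "\<bar>\<beta> back_pt\<bar> \<le> e / 5"
  using first_strand_end_coords[of e] e_pos by (simp_all add: back_pt_def)

lemma diagonal_not_on_curve:
  assumes "0 < m" "m \<le> e / 2" "\<bar>s\<bar> = 1"
  shows "chart_pt (- m) (s * m) \<notin> path_image \<gamma>"
proof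
  assume on_curve: "chart_pt (- m) (s * m) \<in> path_image \<gamma>"
  have coords: "\<bar>\<alpha> (chart_pt (- m) (s * m))\<bar> = m" "\<bar>\<beta> (chart_pt (- m) (s * m))\<bar> = m"
    using assms by (simp_all add: abs_mult)
  then have "norm (chart_pt (- m) (s * m) - \<gamma> t) < r"
    using assms by (intro near_if_coords_le_half) simp_all
  from curve_near_double_point[OF on_curve this] show False
    unfolding coords using assms(1) by linarith
qed

lemma z_not_on_curve: "z1 \<notin> path_image \<gamma>" "z2 \<notin> path_image \<gamma>"
  using diagonal_not_on_curve[of "e / 2" "-1"] diagonal_not_on_curve[of "e / 2" 1] e_pos
  by (simp_all add: z1_def z2_def)

lemma segment_z1_z2_coords:
  assumes "w \<in> closed_segment z1 z2"
  shows "\<alpha> w = - e / 2" "- e / 2 \<le> \<beta> w" "\<beta> w \<le> e / 2"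
proof -
  obtain \<mu> where \<mu>: "0 \<le> \<mu>" "\<mu> \<le> 1"
    "\<alpha> w = (1 - \<mu>) * \<alpha> z1 + \<mu> * \<alpha> z2" "\<beta> w = (1 - \<mu>) * \<beta> z1 + \<mu> * \<beta> z2"
    by (rule closed_segment_coords[OF assms])
  then have "\<alpha> w = (1 - \<mu>) * (- e / 2) + \<mu> * (- e / 2)" "\<beta> w = (1 - \<mu>) * (- e / 2) + \<mu> * (e / 2)"
    by (simp_all add: z1_def z2_def)
  then have "\<alpha> w = - e / 2" "\<beta> w = \<mu> * e - e / 2"
    by (simp_all add: field_simps)
  moreover have "\<mu> * e \<le> e" using \<mu> e_pos by (simp add: mult_left_le_one_le)
  ultimately show "\<alpha> w = - e / 2" "- e / 2 \<le> \<beta> w" "\<beta> w \<le> e / 2"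
    using \<mu> e_pos by simp_all
qed

lemma segment_z1_z2_near: "w \<in> closed_segment z1 z2 \<Longrightarrow> norm (w - \<gamma> t) < r"
  using segment_z1_z2_coords[of w] e_pos by (intro near_if_coords_le_half) (simp_all add: abs_le_iff)

lemma segment_z1_z2_disjoint_loop: "closed_segment z1 z2 \<inter> \<gamma> ` {t..t'} = {}"
proof -
  have False if "w \<in> closed_segment z1 z2" "w \<in> \<gamma> ` {t..t'}" for w
    using loop_near_double_point[OF that(2) segment_z1_z2_near[OF that(1)]]
      segment_z1_z2_coords[OF that(1)] abs_ge_minus_self[of "\<alpha> w"] e_pos
    by (elim disjE conjE; linarith)
  then show ?thesis by blast
qed

lemma segment_z1_z2_disjoint_tail: "closed_segment z1 z2 \<inter> \<gamma> ` {t'..1 - e} = {}"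
proof -
  have False if "w \<in> closed_segment z1 z2" "w \<in> \<gamma> ` {t'..1 - e}" for w
    using tail_near_double_point[OF t_zero e_pos e_less that(2) segment_z1_z2_near[OF that(1)]]
      segment_z1_z2_coords[OF that(1)] abs_ge_minus_self[of "\<alpha> w"] e_pos
    by (elim disjE conjE; linarith)
  then show ?thesis by blast
qed

lemma segment_z1_z2_disjoint_top_vertex: "closed_segment z1 z2 \<inter> closed_segment top_pt (\<gamma> t) = {}"
proof -
  have False if w1: "w \<in> closed_segment z1 z2" and w2: "w \<in> closed_segment top_pt (\<gamma> t)" for w
  proof -
    obtain \<mu> where "\<alpha> w = (1 - \<mu>) * \<alpha> top_pt + \<mu> * \<alpha> (\<gamma> t)"
      by (rule closed_segment_coords[OF w2])
    then have "\<alpha> w = 0" by (simp add: top_pt_def)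
    then show False using segment_z1_z2_coords(1)[OF w1] e_pos by simp
  qed
  then show ?thesis by blast
qed

lemma segment_z1_z2_disjoint_back_top: "closed_segment z1 z2 \<inter> closed_segment back_pt top_pt = {}"
proof -
  have False if w1: "w \<in> closed_segment z1 z2" and w2: "w \<in> closed_segment back_pt top_pt" for w
  proof -
    obtain \<mu> where \<mu>: "0 \<le> \<mu>" "\<mu> \<le> 1"
      "\<alpha> w = (1 - \<mu>) * \<alpha> back_pt + \<mu> * \<alpha> top_pt" "\<beta> w = (1 - \<mu>) * \<beta> back_pt + \<mu> * \<beta> top_pt"
      by (rule closed_segment_coords[OF w2])
    define l where "l = 1 - \<mu>"
    have "0 \<le> l" using \<mu> by (simp add: l_def)
    have \<alpha>w: "\<alpha> w = l * \<alpha> back_pt" and \<beta>w: "\<beta> w = l * \<beta> back_pt + 2 * e - 2 * (l * e)"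
      using \<mu> by (simp_all add: l_def top_pt_def algebra_simps)
    have "- e / 5 \<le> \<beta> back_pt"
      using back_pt_coords(2) abs_ge_minus_self[of "\<beta> back_pt"] by linarith
    then have "l * (- e / 5) \<le> l * \<beta> back_pt" using \<open>0 \<le> l\<close> by (rule mult_left_mono)
    moreover have "l * \<alpha> back_pt \<le> l * (-4 * e / 5)"
      using back_pt_coords(1) \<open>0 \<le> l\<close> by (rule mult_left_mono)
    moreover have "\<alpha> w = - e / 2" "\<beta> w \<le> e / 2" using segment_z1_z2_coords[OF w1] by simp_all
    \<comment> \<open>\<open>\<alpha> w = -e/2\<close> forces \<open>l \<le> 5/8\<close>, and then \<open>\<beta> w \<ge> 2e - 11 l e / 5 \<ge> 5e/8\<close>\<close>
    ultimately show False using \<alpha>w \<beta>w e_pos by (simp add: algebra_simps)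
  qed
  then show ?thesis by blast
qed

lemma convex_cone: "convex cone"
proof -
  have "convex ({w. 1 * \<alpha> w + 0 * \<beta> w \<le> 0} \<inter> {w. (1 / 4) * \<alpha> w + 1 * \<beta> w \<le> 0}
      \<inter> {w. (1 / 4) * \<alpha> w + (-1) * \<beta> w \<le> 0})"
    by (intro convex_Int convex_chart_halfplane(1))
  moreover have "{w. 1 * \<alpha> w + 0 * \<beta> w \<le> 0} \<inter> {w. (1 / 4) * \<alpha> w + 1 * \<beta> w \<le> 0}
      \<inter> {w. (1 / 4) * \<alpha> w + (-1) * \<beta> w \<le> 0} = cone"
    by (auto simp: cone_def abs_le_iff)
  ultimately show ?thesis by simp
qed

lemma z_not_in_cone: "z1 \<notin> cone" "z2 \<notin> cone"
  using e_pos by (simp_all add: cone_def z1_def z2_def)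

lemma last_arc_in_cone:
  assumes "\<tau> \<in> {0..1}"
  shows "subpath (1 - e) 1 \<gamma> \<tau> \<in> cone"
proof -
  define d where "d = e * (1 - \<tau>)"
  have "0 \<le> d" "d \<le> e" using assms e_pos by (simp_all add: d_def mult_left_le_one_le)
  then have "\<alpha> (\<gamma> (1 - d)) \<le> -4 * d / 5" "\<bar>\<beta> (\<gamma> (1 - d))\<bar> \<le> d / 5"
    by (rule first_strand_end_coords)+
  moreover have "subpath (1 - e) 1 \<gamma> \<tau> = \<gamma> (1 - d)" by (simp add: subpath_def d_def algebra_simps)
  ultimately show ?thesis
    using \<open>0 \<le> d\<close> unfolding cone_def by (simp del: subpath_def)
qed

lemma chord_in_cone: "closed_segment back_pt (\<gamma> t) \<subseteq> cone"
proof (rule closed_segment_subset[OF _ _ convex_cone])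
  show "back_pt \<in> cone" using back_pt_coords by (simp add: cone_def)
  show "\<gamma> t \<in> cone" by (simp add: cone_def)
qed

definition triangle :: "real \<Rightarrow> complex" where
  "triangle = linepath back_pt (\<gamma> t) +++ linepath (\<gamma> t) top_pt +++ linepath top_pt back_pt"

definition tail_cycle :: "real \<Rightarrow> complex" where
  "tail_cycle = subpath t' (1 - e) \<gamma> +++ linepath back_pt top_pt +++ linepath top_pt (\<gamma> t)"

lemma tail_params: "t' \<in> {0..1}" "1 - e \<in> {0..1}" "t' \<le> 1 - e"
  using params e_pos e_less_tail by auto

lemma path_image_tail_cycle:
  "path_image tail_cycle = \<gamma> ` {t'..1 - e} \<union> closed_segment back_pt top_pt \<union> closed_segment top_pt (\<gamma> t)"
  using tail_params by (auto simp: tail_cycle_def path_image_join path_image_subpath back_pt_def)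

lemma winding_number_last_arc:
  assumes "z \<in> {z1, z2}"
  shows "winding_number (subpath (1 - e) 1 \<gamma>) z = winding_number (linepath back_pt (\<gamma> t)) z"
proof (rule winding_number_paths_linear_eq[symmetric])
  show "path (subpath (1 - e) 1 \<gamma>)" using path_curve tail_params by simp
  show "z \<notin> closed_segment (subpath (1 - e) 1 \<gamma> \<tau>) (linepath back_pt (\<gamma> t) \<tau>)"
    if "\<tau> \<in> {0..1}" for \<tau>
  proof -
    have "linepath back_pt (\<gamma> t) \<tau> \<in> cone"
      using chord_in_cone that by (auto simp: linepath_in_path)
    then have "closed_segment (subpath (1 - e) 1 \<gamma> \<tau>) (linepath back_pt (\<gamma> t) \<tau>) \<subseteq> cone"
      using last_arc_in_cone[OF that] by (intro closed_segment_subset convex_cone)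
    then show ?thesis using z_not_in_cone assms by auto
  qed
qed (use closed t_zero in \<open>simp_all add: back_pt_def\<close>)

lemma winding_number_split:
  assumes "z \<in> {z1, z2}"
  shows "winding_number \<gamma> z =
    winding_number (subpath t t' \<gamma>) z + winding_number tail_cycle z + winding_number triangle z"
proof -
  have z: "z \<notin> path_image \<gamma>" using z_not_on_curve assms by auto
  have sub: "path_image (subpath u v \<gamma>) \<subseteq> path_image \<gamma>" if "u \<in> {0..1}" "v \<in> {0..1}" for u v
    using that by (simp add: path_image_subpath_subset)
  have not_chord: "z \<notin> closed_segment back_pt (\<gamma> t)"
    using chord_in_cone z_not_in_cone assms by auto
  have not_top: "z \<notin> closed_segment top_pt (\<gamma> t)" "z \<notin> closed_segment back_pt top_pt"
    using segment_z1_z2_disjoint_top_vertex segment_z1_z2_disjoint_back_top assms by auto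
  have "winding_number \<gamma> z = winding_number (subpath t t' \<gamma>) z + winding_number (subpath t' 1 \<gamma>) z"
    using winding_number_subpath_combine[OF path_curve z, of t t' 1] params t_zero by simp
  moreover have "winding_number (subpath t' 1 \<gamma>) z =
      winding_number (subpath t' (1 - e) \<gamma>) z + winding_number (subpath (1 - e) 1 \<gamma>) z"
    using winding_number_subpath_combine[OF path_curve z, of t' "1 - e" 1] tail_params by simp
  moreover have "winding_number (subpath (1 - e) 1 \<gamma>) z = winding_number (linepath back_pt (\<gamma> t)) z"
    by (rule winding_number_last_arc[OF assms])
  moreover have "winding_number triangle z = winding_number (linepath back_pt (\<gamma> t)) z
      - winding_number (linepath top_pt (\<gamma> t)) z - winding_number (linepath back_pt top_pt) z"
    using not_chord not_top
    by (simp add: triangle_def winding_number_join path_image_join winding_number_reversepath[symmetric]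
        reversepath_linepath closed_segment_commute)
  moreover have "winding_number tail_cycle z = winding_number (subpath t' (1 - e) \<gamma>) z
      + winding_number (linepath back_pt top_pt) z + winding_number (linepath top_pt (\<gamma> t)) z"
  proof -
    have "z \<notin> path_image (subpath t' (1 - e) \<gamma>)" using sub[OF tail_params(1,2)] z by blast
    moreover have "path (subpath t' (1 - e) \<gamma>)" using path_curve tail_params by simp
    ultimately show ?thesis
      using not_top by (simp add: tail_cycle_def winding_number_join path_image_join back_pt_def)
  qed
  ultimately show ?thesis by (simp add: algebra_simps)
qed

lemma winding_number_loop_z1_z2:
  "winding_number (subpath t t' \<gamma>) z1 = winding_number (subpath t t' \<gamma>) z2"
proof (rule winding_number_eq[where S = "closed_segment z1 z2"])
  show "path (subpath t t' \<gamma>)" using path_curve params by simp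
  show "closed_segment z1 z2 \<inter> path_image (subpath t t' \<gamma>) = {}"
    using segment_z1_z2_disjoint_loop params by (simp add: path_image_subpath)
qed (use double_point in auto)

lemma winding_number_tail_cycle_z1_z2: "winding_number tail_cycle z1 = winding_number tail_cycle z2"
proof (rule winding_number_eq[where S = "closed_segment z1 z2"])
  show "path tail_cycle" using path_curve tail_params by (simp add: tail_cycle_def back_pt_def)
  show "closed_segment z1 z2 \<inter> path_image tail_cycle = {}"
    unfolding path_image_tail_cycle
    using segment_z1_z2_disjoint_tail segment_z1_z2_disjoint_back_top segment_z1_z2_disjoint_top_vertex
    by blast
qed (use double_point in \<open>auto simp: tail_cycle_def\<close>)

lemma winding_number_triangle_z1: "winding_number triangle z1 = 0"
proof -
  define H where "H = {w. 0 * \<alpha> w + -1 * \<beta> w \<le> e / 5}"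
  have "convex H" unfolding H_def by (rule convex_chart_halfplane(1))
  have "back_pt \<in> H"
    using back_pt_coords(2) abs_ge_minus_self[of "\<beta> back_pt"] by (simp add: H_def)
  moreover have "\<gamma> t \<in> H" "top_pt \<in> H" using e_pos by (simp_all add: H_def top_pt_def)
  ultimately have "closed_segment back_pt (\<gamma> t) \<subseteq> H" "closed_segment (\<gamma> t) top_pt \<subseteq> H"
    "closed_segment top_pt back_pt \<subseteq> H"
    using closed_segment_subset[OF _ _ \<open>convex H\<close>] by blast+
  then have "path_image triangle \<subseteq> H" by (simp add: triangle_def path_image_join)
  moreover have "z1 \<notin> H" using e_pos by (simp add: H_def z1_def)
  ultimately show ?thesis
    using \<open>convex H\<close> by (intro winding_number_zero_outside) (simp_all add: triangle_def)
qed

lemma winding_number_triangle_z2: "winding_number triangle z2 \<noteq> 0"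
proof -
  have "0 < (\<beta> (\<gamma> t) - \<beta> back_pt) * (\<alpha> (\<gamma> t) - \<alpha> z2) - (\<alpha> (\<gamma> t) - \<alpha> back_pt) * (\<beta> (\<gamma> t) - \<beta> z2)"
  proof -
    have "\<alpha> back_pt + \<beta> back_pt < 0"
      using back_pt_coords e_pos abs_ge_self[of "\<beta> back_pt"] by linarith
    then have "0 < (e / 2) * (- (\<alpha> back_pt + \<beta> back_pt))" using e_pos by simp
    then show ?thesis by (simp add: z2_def algebra_simps)
  qed
  moreover have "0 < (\<beta> top_pt - \<beta> (\<gamma> t)) * (\<alpha> top_pt - \<alpha> z2) - (\<alpha> top_pt - \<alpha> (\<gamma> t)) * (\<beta> top_pt - \<beta> z2)"
    using e_pos by (simp add: top_pt_def z2_def)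
  moreover have "0 < (\<beta> back_pt - \<beta> top_pt) * (\<alpha> back_pt - \<alpha> z2) - (\<alpha> back_pt - \<alpha> top_pt) * (\<beta> back_pt - \<beta> z2)"
  proof -
    have "0 < \<beta> back_pt / 2 - 3 * \<alpha> back_pt / 2 - e"
      using back_pt_coords e_pos abs_ge_minus_self[of "\<beta> back_pt"] by linarith
    then have "0 < e * (\<beta> back_pt / 2 - 3 * \<alpha> back_pt / 2 - e)" using e_pos by simp
    then show ?thesis by (simp add: top_pt_def z2_def algebra_simps)
  qed
  ultimately have edges:
    "z2 \<notin> closed_segment back_pt (\<gamma> t)" "z2 \<notin> closed_segment (\<gamma> t) top_pt" "z2 \<notin> closed_segment top_pt back_pt"
    "0 < Im (cnj (\<gamma>' t) * \<gamma>' t') \<Longrightarrow> 0 < Re (winding_number (linepath back_pt (\<gamma> t)) z2) \<and>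
        0 < Re (winding_number (linepath (\<gamma> t) top_pt) z2) \<and> 0 < Re (winding_number (linepath top_pt back_pt) z2)"
    "Im (cnj (\<gamma>' t) * \<gamma>' t') < 0 \<Longrightarrow> Re (winding_number (linepath back_pt (\<gamma> t)) z2) < 0 \<and>
        Re (winding_number (linepath (\<gamma> t) top_pt) z2) < 0 \<and> Re (winding_number (linepath top_pt back_pt) z2) < 0"
    using winding_number_linepath_sign by blast+
  have "Re (winding_number triangle z2) = Re (winding_number (linepath back_pt (\<gamma> t)) z2) +
      Re (winding_number (linepath (\<gamma> t) top_pt) z2) + Re (winding_number (linepath top_pt back_pt) z2)"
    using edges(1-3) by (simp add: triangle_def winding_number_join path_image_join)
  moreover have "Im (cnj (\<gamma>' t) * \<gamma>' t') > 0 \<or> Im (cnj (\<gamma>' t) * \<gamma>' t') < 0"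
    using transversal by linarith
  ultimately have "Re (winding_number triangle z2) \<noteq> 0"
    using edges(4,5) by (elim disjE) (simp_all add: add_pos_pos add_neg_neg)
  then show ?thesis by auto
qed

lemma winding_number_z1_ne_z2: "winding_number \<gamma> z1 \<noteq> winding_number \<gamma> z2"
  using winding_number_split[of z1] winding_number_split[of z2] winding_number_loop_z1_z2
    winding_number_tail_cycle_z1_z2 winding_number_triangle_z1 winding_number_triangle_z2
  by simp

lemma basepoint_in_closure_diagonal_component:
  assumes "\<bar>s\<bar> = 1"
  shows "\<gamma> t \<in> closure (connected_component_set (- path_image \<gamma>) (chart_pt (- (e / 2)) (s * (e / 2))))"
  unfolding closure_approachable
proof (intro allI impI)
  fix \<epsilon> :: real assume "0 < \<epsilon>"
  obtain \<sigma> where \<sigma>: "0 < \<sigma>" "\<sigma> \<le> e / 2" and "\<sigma> * N < \<epsilon>"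
    using small_scale_exists[of "e / 2" \<epsilon>] e_pos \<open>0 < \<epsilon>\<close> by auto
  define y where "y = chart_pt (- \<sigma>) (s * \<sigma>)"
  have "dist y (\<gamma> t) \<le> \<sigma> * N"
    using norm_chart_pt_le[of "- \<sigma>" "s * \<sigma>"] assms \<sigma>
    by (simp add: y_def dist_norm abs_mult distrib_left)
  have "closed_segment (chart_pt (- (e / 2)) (s * (e / 2))) y \<subseteq> - path_image \<gamma>"
  proof
    fix w assume "w \<in> closed_segment (chart_pt (- (e / 2)) (s * (e / 2))) y"
    then obtain \<mu> where \<mu>: "0 \<le> \<mu>" "\<mu> \<le> 1"
      "w = (1 - \<mu>) *\<^sub>R chart_pt (- (e / 2)) (s * (e / 2)) + \<mu> *\<^sub>R y"
      by (auto simp: closed_segment_def)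
    define m where "m = (1 - \<mu>) * (e / 2) + \<mu> * \<sigma>"
    have "w = chart_pt (- m) (s * m)"
      unfolding \<mu>(3) y_def chart_pt_combination m_def by (simp add: algebra_simps)
    have "m - \<sigma> = (1 - \<mu>) * (e / 2 - \<sigma>)" "e / 2 - m = \<mu> * (e / 2 - \<sigma>)"
      by (simp_all add: m_def field_simps)
    moreover have "0 \<le> (1 - \<mu>) * (e / 2 - \<sigma>)" "0 \<le> \<mu> * (e / 2 - \<sigma>)"
      using \<mu> \<sigma> by simp_all
    ultimately have "\<sigma> \<le> m \<and> m \<le> e / 2" by linarith
    then show "w \<in> - path_image \<gamma>"
      using \<open>w = chart_pt (- m) (s * m)\<close> diagonal_not_on_curve[of m s] \<sigma> assms by simp
  qed
  then have "y \<in> connected_component_set (- path_image \<gamma>) (chart_pt (- (e / 2)) (s * (e / 2)))"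
    by (simp add: connected_componentI[OF connected_segment])
  then show "\<exists>y \<in> connected_component_set (- path_image \<gamma>) (chart_pt (- (e / 2)) (s * (e / 2))).
      dist y (\<gamma> t) < \<epsilon>"
    using \<open>dist y (\<gamma> t) \<le> \<sigma> * N\<close> \<open>\<sigma> * N < \<epsilon>\<close> by force
qed

lemma two_inner_faces_at_basepoint:
  assumes "z2 \<in> inside (\<gamma> ` {t..t'})"
  obtains F1 F2 where "F1 \<in> faces \<gamma>" "F2 \<in> faces \<gamma>" "\<gamma> 0 \<in> closure F1" "\<gamma> 0 \<in> closure F2"
    "F1 \<noteq> F2" "F1 \<noteq> ext_face \<gamma>" "F2 \<noteq> ext_face \<gamma>"
proof
  define F1 where "F1 = connected_component_set (- path_image \<gamma>) z1"
  define F2 where "F2 = connected_component_set (- path_image \<gamma>) z2"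
  show "F1 \<in> faces \<gamma>" "F2 \<in> faces \<gamma>"
    using z_not_on_curve by (simp_all add: faces_def F1_def F2_def componentsI)
  have "\<gamma> t \<in> closure F1" "\<gamma> t \<in> closure F2"
    using basepoint_in_closure_diagonal_component[of "-1"] basepoint_in_closure_diagonal_component[of 1]
    by (simp_all add: F1_def F2_def z1_def z2_def)
  then show "\<gamma> 0 \<in> closure F1" "\<gamma> 0 \<in> closure F2" by (simp_all only: t_zero)
  show "F1 \<noteq> F2"
  proof
    assume "F1 = F2"
    then have "z2 \<in> F1" using z_not_on_curve by (simp add: F2_def)
    moreover have "z1 \<in> F1" using z_not_on_curve by (simp add: F1_def)
    ultimately have "winding_number \<gamma> z1 = winding_number \<gamma> z2"
      using path_curve closed
      by (intro winding_number_eq[where S = F1])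
        (auto simp: F1_def pathfinish_def pathstart_def dest: connected_component_in)
    then show False using winding_number_z1_ne_z2 by simp
  qed
  have "connected_component (- \<gamma> ` {t..t'}) z2 z1"
    using segment_z1_z2_disjoint_loop
    by (intro connected_componentI[OF connected_segment]) (auto simp: closed_segment_commute)
  then have "z1 \<in> inside (\<gamma> ` {t..t'})" using inside_same_component assms by blast
  moreover have "\<gamma> ` {t..t'} \<subseteq> path_image \<gamma>" using params by (auto simp: path_image_def)
  then have "inside (\<gamma> ` {t..t'}) \<inter> ext_face \<gamma> = {}"
    using outside_mono inside_Int_outside unfolding ext_face_def by blast
  moreover have "z1 \<in> F1" "z2 \<in> F2" using z_not_on_curve by (simp_all add: F1_def F2_def)
  ultimately show "F1 \<noteq> ext_face \<gamma>" "F2 \<noteq> ext_face \<gamma>" using assms by blast+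
qed

end

lemma (in double_point_chart) wedge_outside_loop_at_basepoint:
  assumes "t = 0" and two: "card {F \<in> faces \<gamma>. \<gamma> 0 \<in> closure F} = 2"
    and ext: "ext_face \<gamma> \<in> faces \<gamma>" "\<gamma> 0 \<in> closure (ext_face \<gamma>)"
  obtains z where "z \<in> wedge" "z \<notin> inside (\<gamma> ` {t..t'})"
proof -
  obtain e where "0 < e" "e \<le> h / 2" "e * N < r"
    using small_scale_exists[of "h / 2" r] h_pos r_pos by auto
  then have "e < h" using h_pos by simp
  interpret basepoint: basepoint_double_point \<gamma> \<gamma>' t t' h r e
    by (intro basepoint_double_point.intro double_point_chart_axioms basepoint_double_point_axioms.intro)
      (use assms \<open>0 < e\<close> \<open>e < h\<close> \<open>e * N < r\<close> in auto)
  have "basepoint.z2 \<in> wedge"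
    using \<open>0 < e\<close> basepoint.near_if_coords_le_half[of basepoint.z2]
    by (simp add: wedge_def basepoint.z2_def)
  moreover have "basepoint.z2 \<notin> inside (\<gamma> ` {t..t'})"
  proof
    assume "basepoint.z2 \<in> inside (\<gamma> ` {t..t'})"
    then obtain F1 F2 where "F1 \<in> faces \<gamma>" "F2 \<in> faces \<gamma>" "\<gamma> 0 \<in> closure F1" "\<gamma> 0 \<in> closure F2"
      "F1 \<noteq> F2" "F1 \<noteq> ext_face \<gamma>" "F2 \<noteq> ext_face \<gamma>"
      by (rule basepoint.two_inner_faces_at_basepoint)
    moreover obtain F G where FG: "{F \<in> faces \<gamma>. \<gamma> 0 \<in> closure F} = {F, G}"
      using two unfolding card_2_iff by blast
    ultimately have "F1 \<in> {F, G}" "F2 \<in> {F, G}" "ext_face \<gamma> \<in> {F, G}"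
      using ext unfolding FG[symmetric] by simp_all
    with \<open>F1 \<noteq> F2\<close> \<open>F1 \<noteq> ext_face \<gamma>\<close> \<open>F2 \<noteq> ext_face \<gamma>\<close> show False by auto
  qed
  ultimately show ?thesis by (rule that)
qed

section \<open>The first double point\<close>

lemma double_point_if_not_simple:
  assumes "path \<gamma>" "\<gamma> 0 = \<gamma> 1" "\<not> simple_path \<gamma>"
  obtains s s' where "0 \<le> s" "s < s'" "s' < 1" "\<gamma> s = \<gamma> s'"
proof -
  obtain x y where xy: "x \<in> {0..1}" "y \<in> {0..1}" "x < y" "\<gamma> x = \<gamma> y" "\<not> (x = 0 \<and> y = 1)"
    using assms(1,3) unfolding simple_path_def loop_free_def
    by (metis linorder_neqE_linordered_idom)
  show ?thesis
  proof (cases "y = 1")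
    case True
    then show ?thesis using that[of 0 x] xy assms(2) by auto
  next
    case False
    then show ?thesis using that[of x y] xy by auto
  qed
qed

lemma earliest_double_point:
  assumes "finite (self_intersections \<gamma>)"
    and "\<And>p. p \<in> self_intersections \<gamma> \<Longrightarrow> finite {s \<in> {0..<1}. \<gamma> s = p}"
    and "0 \<le> s" "s < s'" "s' < 1" "\<gamma> s = \<gamma> s'"
  obtains t t' where "0 \<le> t" "t < t'" "t' < 1" "\<gamma> t = \<gamma> t'"
    "\<And>\<sigma> \<tau>. 0 \<le> \<sigma> \<Longrightarrow> \<sigma> < \<tau> \<Longrightarrow> \<tau> < t' \<Longrightarrow> \<gamma> \<sigma> \<noteq> \<gamma> \<tau>"
proof -
  define S where "S = {\<tau> \<in> {0..<1}. \<exists>\<sigma>. 0 \<le> \<sigma> \<and> \<sigma> < \<tau> \<and> \<gamma> \<sigma> = \<gamma> \<tau>}"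
  have "S \<subseteq> (\<Union>p \<in> self_intersections \<gamma>. {s \<in> {0..<1}. \<gamma> s = p})"
  proof
    fix \<tau> assume "\<tau> \<in> S"
    then obtain \<sigma> where "\<tau> \<in> {0..<1}" "0 \<le> \<sigma>" "\<sigma> < \<tau>" "\<gamma> \<sigma> = \<gamma> \<tau>" by (auto simp: S_def)
    then have "\<gamma> \<tau> \<in> self_intersections \<gamma>"
      unfolding self_intersections_def by (intro CollectI exI[of _ \<sigma>] exI[of _ \<tau>]) auto
    with \<open>\<tau> \<in> {0..<1}\<close> show "\<tau> \<in> (\<Union>p \<in> self_intersections \<gamma>. {s \<in> {0..<1}. \<gamma> s = p})" by blast
  qed
  then have "finite S" using assms(1,2) by (meson finite_UN_I finite_subset)
  moreover have "s' \<in> S" using assms(3-6) by (auto simp: S_def)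
  ultimately have "Min S \<in> S" "\<And>\<tau>. \<tau> \<in> S \<Longrightarrow> Min S \<le> \<tau>" by (auto intro: Min_in)
  then obtain t where "0 \<le> t" "t < Min S" "Min S < 1" "\<gamma> t = \<gamma> (Min S)" by (auto simp: S_def)
  moreover have "\<gamma> \<sigma> \<noteq> \<gamma> \<tau>" if "0 \<le> \<sigma>" "\<sigma> < \<tau>" "\<tau> < Min S" for \<sigma> \<tau>
    using that \<open>\<And>\<tau>. \<tau> \<in> S \<Longrightarrow> Min S \<le> \<tau>\<close>[of \<tau>] \<open>Min S < 1\<close> by (force simp: S_def)
  ultimately show ?thesis by (rule that)
qed

lemma tangent_eq:
  assumes "(\<gamma> has_vector_derivative v) (at s within {0..1})" "s \<in> {0..1}"
  shows "tangent \<gamma> s = v"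
  using vector_derivative_within_closed_interval[of 0 1 s \<gamma> v] assms by (simp add: tangent_def)

lemma first_transverse_double_point:
  assumes "curveC \<gamma>" "\<not> simple_path \<gamma>"
  obtains \<gamma>' t t' where "transverse_double_point \<gamma> \<gamma>' t t'"
    "\<And>\<sigma> \<tau>. 0 \<le> \<sigma> \<Longrightarrow> \<sigma> < \<tau> \<Longrightarrow> \<tau> \<le> t' \<Longrightarrow> \<gamma> \<sigma> = \<gamma> \<tau> \<Longrightarrow> \<sigma> = t \<and> \<tau> = t'"
proof -
  obtain \<gamma>' where closed: "\<gamma> 0 = \<gamma> 1" "\<gamma>' 0 = \<gamma>' 1"
    and deriv: "\<And>s. s \<in> {0..1} \<Longrightarrow> (\<gamma> has_vector_derivative \<gamma>' s) (at s within {0..1})"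
    using assms(1) unfolding curveC_def regular_curve_def by blast
  have "path \<gamma>"
    unfolding path_def continuous_on_eq_continuous_within
    using deriv has_vector_derivative_continuous by blast
  have fin: "finite (self_intersections \<gamma>)"
    and fibre: "\<And>p. p \<in> self_intersections \<gamma> \<Longrightarrow> card {s \<in> {0..<1}. \<gamma> s = p} = 2"
    and transversal: "\<And>p s u. p \<in> self_intersections \<gamma> \<Longrightarrow> s \<in> {0..<1} \<Longrightarrow> u \<in> {0..<1} \<Longrightarrow>
      s \<noteq> u \<Longrightarrow> \<gamma> s = p \<Longrightarrow> \<gamma> u = p \<Longrightarrow> Im (cnj (tangent \<gamma> s) * tangent \<gamma> u) \<noteq> 0"
    using assms(1) unfolding curveC_def generic_curve_def by blast+
  have fin_fibre: "finite {s \<in> {0..<1}. \<gamma> s = p}" if "p \<in> self_intersections \<gamma>" for p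
    using fibre[OF that] by (metis card.infinite zero_neq_numeral)
  obtain s s' where ss': "0 \<le> s" "s < s'" "s' < 1" "\<gamma> s = \<gamma> s'"
    by (rule double_point_if_not_simple[OF \<open>path \<gamma>\<close> closed(1) assms(2)])
  obtain t t' where tt': "0 \<le> t" "t < t'" "t' < 1" "\<gamma> t = \<gamma> t'"
    and earliest: "\<And>\<sigma> \<tau>. 0 \<le> \<sigma> \<Longrightarrow> \<sigma> < \<tau> \<Longrightarrow> \<tau> < t' \<Longrightarrow> \<gamma> \<sigma> \<noteq> \<gamma> \<tau>"
    using earliest_double_point[OF fin fin_fibre ss'] by blast
  have p: "\<gamma> t \<in> self_intersections \<gamma>"
    unfolding self_intersections_def using tt' by (intro CollectI exI[of _ t] exI[of _ t']) auto
  have fibre_t: "s = t \<or> s = t'" if "s \<in> {0..<1}" "\<gamma> s = \<gamma> t" for s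
  proof (rule ccontr)
    assume "\<not> (s = t \<or> s = t')"
    then have "card {t, t', s} = 3" using tt' by simp
    moreover have "{t, t', s} \<subseteq> {s \<in> {0..<1}. \<gamma> s = \<gamma> t}" using that tt' by auto
    ultimately have "3 \<le> card {s \<in> {0..<1}. \<gamma> s = \<gamma> t}" using fin_fibre[OF p] by (metis card_mono)
    then show False using fibre[OF p] by simp
  qed
  have t01: "t \<in> {0..1}" "t' \<in> {0..1}" using tt' by auto
  have "Im (cnj (tangent \<gamma> t) * tangent \<gamma> t') \<noteq> 0"
    by (rule transversal[OF p]) (use tt' in auto)
  moreover have "tangent \<gamma> t = \<gamma>' t" "tangent \<gamma> t' = \<gamma>' t'"
    using tangent_eq[OF deriv[OF t01(1)] t01(1)] tangent_eq[OF deriv[OF t01(2)] t01(2)] by simp_all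
  ultimately have "Im (cnj (\<gamma>' t) * \<gamma>' t') \<noteq> 0" by simp
  then have "transverse_double_point \<gamma> \<gamma>' t t'"
    using deriv closed tt' fibre_t by (intro transverse_double_point.intro) simp_all
  moreover have "\<sigma> = t \<and> \<tau> = t'" if "0 \<le> \<sigma>" "\<sigma> < \<tau>" "\<tau> \<le> t'" "\<gamma> \<sigma> = \<gamma> \<tau>" for \<sigma> \<tau>
  proof -
    have "\<not> \<tau> < t'" using earliest[of \<sigma> \<tau>] that by blast
    then have "\<tau> = t'" using that by simp
    then show ?thesis using fibre_t[of \<sigma>] that tt' by auto
  qed
  ultimately show ?thesis by (rule that)
qed

lemma (in transverse_double_point) is_loop_if_first:
  assumes "\<And>\<sigma> \<tau>. 0 \<le> \<sigma> \<Longrightarrow> \<sigma> < \<tau> \<Longrightarrow> \<tau> \<le> t' \<Longrightarrow> \<gamma> \<sigma> = \<gamma> \<tau> \<Longrightarrow> \<sigma> = t \<and> \<tau> = t'"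
  shows "is_loop \<gamma> t t'"
proof -
  have "x = y \<or> x = t \<and> y = t' \<or> x = t' \<and> y = t"
    if "x \<in> closed_segment t t'" "y \<in> closed_segment t t'" "\<gamma> x = \<gamma> y" for x y
    using that assms[of x y] assms[of y x] params
    by (cases x y rule: linorder_cases) (auto simp: closed_segment_eq_real_ivl)
  then have "simple_path (subpath t t' \<gamma>)"
    using path_curve params by (simp add: simple_path_subpath_eq)
  then show ?thesis
    using params double_point by (simp add: is_loop_def is_split_pair_def direct_split_def)
qed

theorem lemma8:
  fixes \<gamma> :: "real \<Rightarrow> complex"
  assumes "curveC \<gamma>"
    and "outer_basepoint \<gamma>"
    and "\<not> simple_path \<gamma>"
  shows "\<exists>t t'. outwards_loop \<gamma> t t'"
proof -
  obtain \<gamma>' t t' where double_point: "transverse_double_point \<gamma> \<gamma>' t t'" and first: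
      "\<And>\<sigma> \<tau>. 0 \<le> \<sigma> \<Longrightarrow> \<sigma> < \<tau> \<Longrightarrow> \<tau> \<le> t' \<Longrightarrow> \<gamma> \<sigma> = \<gamma> \<tau> \<Longrightarrow> \<sigma> = t \<and> \<tau> = t'"
    using first_transverse_double_point[OF assms(1,3)] by blast
  interpret transverse_double_point \<gamma> \<gamma>' t t' by (fact double_point)
  obtain h r where chart: "double_point_chart \<gamma> \<gamma>' t t' h r" by (rule double_point_chart_exists)
  interpret double_point_chart \<gamma> \<gamma>' t t' h r by (fact chart)
  have faces: "card {F \<in> faces \<gamma>. \<gamma> 0 \<in> closure F} = 2" "ext_face \<gamma> \<in> faces \<gamma>"
    "\<gamma> 0 \<in> closure (ext_face \<gamma>)"
    using assms(2) unfolding outer_basepoint_def Let_def by auto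
  obtain z where "z \<in> wedge" "z \<notin> inside (\<gamma> ` {t..t'})"
  proof (cases "t = 0")
    case True
    then show ?thesis using wedge_outside_loop_at_basepoint faces that by blast
  next
    case False
    then have "0 < t" using params by simp
    moreover obtain z where "z \<in> wedge" using wedge_nonempty by blast
    ultimately show ?thesis
      using wedge_outside_loop_if_start_outside first start_not_inside_loop faces(3) that by blast
  qed
  then show ?thesis using outwards_loop_if_wedge_outside is_loop_if_first first by blast
qed

end
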